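(* Let $G$ be a connected finite simple graph of order $p$ and size $q=p+1$ with normal graph algebra $\mathcal{N}G$ over a field $\mathbb{F}$ of characteristic not $2$, such that every set of two distinct edges of $G$ is the support of $u^2$ for some $u\in U_G$. Then $G$ is not edge-square, and $G$ is a doubly-odd paddle graph. Moreover, every doubly-odd paddle graph has the property that every set of two distinct edges is the support of $u^2$ for some $u\in U_G$.
   Context: For a finite simple graph $G$ with vertex set $VG$ and edge set $EG$, $\mathcal{N}G=U_G\oplus\mathfrak{Z}_G$ with $U_G$ having basis $VG$ and $\mathfrak{Z}_G$ basis $EG$ (edge with endpoints $x,y$ written $[x,y]$), commutative bilinear product determined by: for distinct vertices $x,y$, $xy=[x,y]$ if adjacent and $0$ otherwise; $x^2=\sum_{y\sim x}[x,y]$; products involving $\mathfrak{Z}_G$ are $0$. Equivalently, for $u=\sum_x\theta_x x$, $u^2=\sum_{[x,y]\in EG}(\theta_x+\theta_y)^2[x,y]$. The support of $\mathfrak{z}\in\mathfrak{Z}_G$ is the set of edges with nonzero coefficient. $G$ is edge-square if for every edge $\mathfrak{e}$ there is $u\in U_G$ with $u^2=\mathfrak{e}$. A doubly-odd paddle graph is a graph consisting of two edge-disjoint cycles of odd length which either share exactly one vertex, or are vertex-disjoint and joined by a path between a vertex of one and a vertex of the other whose internal vertices lie on neither cycle (and nothing else). *)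

theory Defs
  imports Main
begin

definition simple_graph :: "'a set \<Rightarrow> 'a set set \<Rightarrow> bool" where
  "simple_graph V E \<longleftrightarrow> finite V \<and>
     (\<forall>e\<in>E. \<exists>x y. x \<noteq> y \<and> x \<in> V \<and> y \<in> V \<and> e = {x, y})"

definition adjacent :: "'a set set \<Rightarrow> 'a \<Rightarrow> 'a \<Rightarrow> bool" where
  "adjacent E x y \<longleftrightarrow> {x, y} \<in> E"

definition connected_graph :: "'a set \<Rightarrow> 'a set set \<Rightarrow> bool" where
  "connected_graph V E \<longleftrightarrow> V \<noteq> {} \<and>
     (\<forall>x\<in>V. \<forall>y\<in>V. (\<lambda>a b. a \<in> V \<and> b \<in> V \<and> adjacent E a b)\<^sup>*\<^sup>* x y)"

(* Elements of U_G: coefficient functions theta on the vertex basis. *)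
definition in_U :: "'a set \<Rightarrow> ('a \<Rightarrow> 'k::field) \<Rightarrow> bool" where
  "in_U V \<theta> \<longleftrightarrow> (\<forall>x. x \<notin> V \<longrightarrow> \<theta> x = 0)"

(* u^2 in Z_G, given as coefficient function on edges:
   coefficient of [x,y] is (theta x + theta y)^2; zero off the edge set. *)
definition square :: "'a set set \<Rightarrow> ('a \<Rightarrow> 'k::field) \<Rightarrow> 'a set \<Rightarrow> 'k" where
  "square E \<theta> e = (if e \<in> E then (\<Sum>x\<in>e. \<theta> x)\<^sup>2 else 0)"

definition support :: "'a set set \<Rightarrow> ('a set \<Rightarrow> 'k::field) \<Rightarrow> 'a set set" where
  "support E z = {e \<in> E. z e \<noteq> 0}"

definition edge_vec :: "'a set \<Rightarrow> 'a set \<Rightarrow> 'k::field" where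
  "edge_vec e = (\<lambda>f. if f = e then 1 else 0)"

definition edge_square :: "'k::field itself \<Rightarrow> 'a set \<Rightarrow> 'a set set \<Rightarrow> bool" where
  "edge_square TYPE('k) V E \<longleftrightarrow>
     (\<forall>e\<in>E. \<exists>\<theta> :: 'a \<Rightarrow> 'k. in_U V \<theta> \<and> square E \<theta> = edge_vec e)"

definition two_edge_support :: "'k::field itself \<Rightarrow> 'a set \<Rightarrow> 'a set set \<Rightarrow> bool" where
  "two_edge_support TYPE('k) V E \<longleftrightarrow>
     (\<forall>e1\<in>E. \<forall>e2\<in>E. e1 \<noteq> e2 \<longrightarrow>
        (\<exists>\<theta> :: 'a \<Rightarrow> 'k. in_U V \<theta> \<and> support E (square E \<theta>) = {e1, e2}))"

definition is_cycle :: "'a list \<Rightarrow> bool" where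
  "is_cycle cs \<longleftrightarrow> distinct cs \<and> length cs \<ge> 3"

definition cycle_edges :: "'a list \<Rightarrow> 'a set set" where
  "cycle_edges cs = {{cs ! i, cs ! ((i + 1) mod length cs)} | i. i < length cs}"

definition path_edges :: "'a list \<Rightarrow> 'a set set" where
  "path_edges ps = {{ps ! i, ps ! (i + 1)} | i. i + 1 < length ps}"

definition doubly_odd_paddle :: "'a set \<Rightarrow> 'a set set \<Rightarrow> bool" where
  "doubly_odd_paddle V E \<longleftrightarrow>
     (\<exists>c1 c2. is_cycle c1 \<and> is_cycle c2 \<and> odd (length c1) \<and> odd (length c2) \<and>
        cycle_edges c1 \<inter> cycle_edges c2 = {} \<and>
        ((\<exists>v. set c1 \<inter> set c2 = {v} \<and>
              V = set c1 \<union> set c2 \<and> E = cycle_edges c1 \<union> cycle_edges c2)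
         \<or> (set c1 \<inter> set c2 = {} \<and>
            (\<exists>ps. distinct ps \<and> length ps \<ge> 2 \<and>
               hd ps \<in> set c1 \<and> last ps \<in> set c2 \<and>
               (\<forall>x\<in>set (butlast (tl ps)). x \<notin> set c1 \<and> x \<notin> set c2) \<and>
               V = set c1 \<union> set c2 \<union> set ps \<and>
               E = cycle_edges c1 \<union> cycle_edges c2 \<union> path_edges ps))))"

end

theory Submission
  imports Defs "HOL-Library.Function_Algebras" "HOL.Vector_Spaces"
begin

text \<open>For \<open>u = \<Sum>x. \<theta> x \<cdot> x\<close> the support of \<open>u\<^sup>2\<close> is the set of edges \<open>[x, y]\<close> with
  \<open>\<theta> x + \<theta> y \<noteq> 0\<close>, so everything is about the linear edge-sum map \<open>\<theta> \<mapsto> (\<theta> x + \<theta> y)\<close>.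

  If every single edge were such a support, the indicators of all \<open>q\<close> edges would lie in
  the image of this map, whose domain has dimension \<open>p\<close>, so \<open>q \<le> p\<close>. The same count on
  \<open>G - z\<close> rules out a vertex \<open>z\<close> of degree 1, connectivity rules out degree 0, and as the
  degrees add up to \<open>2p + 2\<close>, either one vertex has degree 4 or two have degree 3, all others
  having degree 2.

  If the edge sums of \<open>\<theta>\<close> vanish except on \<open>e\<^sub>1\<close> and \<open>e\<^sub>2\<close>, the signs of \<open>\<theta>\<close> alternate along
  any walk avoiding both, so a cycle through exactly one of them is odd: every cycle other than
  \<open>G\<close> itself is odd. A cycle through one end of a path that avoids the path's edges cannot
  pass through its other end, since that would yield three closed walks of odd lengths summing
  to an even number. Removing cycles through the vertices of degree above 2 keeps all degrees
  even and leaves the two odd cycles (and the path) of a doubly-odd paddle.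

  Conversely, on a doubly-odd paddle every pair of edges is realised by explicit patterns of
  signs \<open>\<plusminus>1\<close> along the cycles and the path: alternating values cancel on every edge, and
  on an odd cycle one change of sign leaves exactly one edge with nonzero sum \<open>\<plusminus>2\<close>, which is
  where the characteristic must differ from 2.\<close>

section \<open>Supports of squares and a rank bound\<close>

definition nonzero_edges :: "'a set set \<Rightarrow> ('a \<Rightarrow> 'k::field) \<Rightarrow> 'a set set" where
  "nonzero_edges F \<theta> = {g \<in> F. sum \<theta> g \<noteq> 0}"

lemma support_square: "support E (square E \<theta>) = nonzero_edges E \<theta>"
  by (auto simp: support_def square_def nonzero_edges_def)

lemma two_edge_support_iff:
  "two_edge_support TYPE('k::field) V E \<longleftrightarrow>
     (\<forall>e1\<in>E. \<forall>e2\<in>E. e1 \<noteq> e2 \<longrightarrow> (\<exists>\<theta> :: 'a \<Rightarrow> 'k. in_U V \<theta> \<and> nonzero_edges E \<theta> = {e1, e2}))"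
  by (simp add: two_edge_support_def support_square)

lemma nonzero_edges_if_square_eq_edge_vec:
  assumes "e \<in> E" and "square E \<theta> = edge_vec e"
  shows "nonzero_edges E \<theta> = {e}"
proof -
  have "(sum \<theta> g)\<^sup>2 = (if g = e then 1 else 0)" if "g \<in> E" for g
    using assms(2) that by (metis edge_vec_def square_def)
  then have "sum \<theta> g \<noteq> 0 \<longleftrightarrow> g = e" if "g \<in> E" for g
    using that by (metis one_neq_zero zero_eq_power2)
  then show ?thesis using assms(1) by (auto simp: nonzero_edges_def)
qed

interpretation fun_vs: vector_space "\<lambda>c (f :: 'b \<Rightarrow> 'k::field) x. c * f x"
  by unfold_locales (auto simp: fun_eq_iff algebra_simps)

lemma sum_fun_apply: "finite A \<Longrightarrow> (\<Sum>i\<in>A. (f i :: 'b \<Rightarrow> 'k::field)) x = (\<Sum>i\<in>A. f i x)"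
  by (induction A rule: finite_induct) auto

lemma edge_sums_in_span:
  fixes \<theta> :: "'a \<Rightarrow> 'k::field"
  assumes "finite V" and "in_U V \<theta>" and "\<And>g. g \<in> F \<Longrightarrow> finite g"
  shows "(\<lambda>g. if g \<in> F then sum \<theta> g else 0) \<in>
           fun_vs.span ((\<lambda>v g. if g \<in> F \<and> v \<in> g then 1 else 0) ` V)"
proof -
  let ?w = "\<lambda>v g. if g \<in> F \<and> v \<in> g then 1 else (0::'k)"
  have "(\<lambda>g. if g \<in> F then sum \<theta> g else 0) = (\<Sum>v\<in>V. (\<lambda>g. \<theta> v * ?w v g))"
  proof
    fix g
    have "(\<Sum>v\<in>V. \<theta> v * ?w v g) = (if g \<in> F then (\<Sum>v\<in>V \<inter> g. \<theta> v) else 0)"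
      using assms(1) by (auto simp: sum.inter_restrict if_distrib intro: sum.cong)
    also have "\<dots> = (if g \<in> F then sum \<theta> g else 0)"
      using assms by (auto intro!: sum.mono_neutral_left simp: in_U_def)
    finally show "(if g \<in> F then sum \<theta> g else 0) = (\<Sum>v\<in>V. (\<lambda>g. \<theta> v * ?w v g)) g"
      using assms(1) by (simp add: sum_fun_apply)
  qed
  also have "\<dots> \<in> fun_vs.span (?w ` V)"
    by (intro fun_vs.span_sum fun_vs.span_scale fun_vs.span_base) auto
  finally show ?thesis .
qed

text \<open>The edge sums of all \<open>\<theta>\<close> supported on \<open>V\<close> form a space of dimension at most \<open>card V\<close>,
  which here contains the linearly independent indicators of all edges of \<open>F\<close>.\<close>
lemma card_le_card_if_singleton_nonzero_edges:
  fixes V :: "'a set" and F :: "'a set set"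
  assumes fin: "finite V" "finite F" "\<And>g. g \<in> F \<Longrightarrow> finite g"
    and single: "\<And>f. f \<in> F \<Longrightarrow> \<exists>\<theta> :: 'a \<Rightarrow> 'k::field. in_U V \<theta> \<and> nonzero_edges F \<theta> = {f}"
  shows "card F \<le> card V"
proof -
  define w :: "'a \<Rightarrow> 'a set \<Rightarrow> 'k" where "w v = (\<lambda>g. if g \<in> F \<and> v \<in> g then 1 else 0)" for v
  define \<delta> :: "'a set \<Rightarrow> 'a set \<Rightarrow> 'k" where "\<delta> f = (\<lambda>g. if g = f then 1 else 0)" for f
  have \<delta>_in_span: "\<delta> f \<in> fun_vs.span (w ` V)" if f: "f \<in> F" for f
  proof -
    obtain \<theta> :: "'a \<Rightarrow> 'k" where \<theta>: "in_U V \<theta>" "nonzero_edges F \<theta> = {f}"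
      using single[OF f] by blast
    let ?c = "sum \<theta> f"
    have "?c \<noteq> 0" using \<theta>(2) by (auto simp: nonzero_edges_def)
    have "(\<lambda>g. if g \<in> F then sum \<theta> g else 0) = (\<lambda>g. ?c * \<delta> f g)"
      using \<theta>(2) f by (auto simp: fun_eq_iff nonzero_edges_def \<delta>_def)
    moreover have "(\<lambda>g. if g \<in> F then sum \<theta> g else 0) \<in> fun_vs.span (w ` V)"
      unfolding w_def by (rule edge_sums_in_span) (use fin \<theta> in auto)
    ultimately have "(\<lambda>g. ?c * \<delta> f g) \<in> fun_vs.span (w ` V)" by simp
    then have "(\<lambda>g. inverse ?c * (?c * \<delta> f g)) \<in> fun_vs.span (w ` V)"
      by (rule fun_vs.span_scale)
    then show ?thesis using \<open>?c \<noteq> 0\<close> by (simp add: fun_eq_iff)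
  qed
  have inj_\<delta>: "inj \<delta>" by (auto simp: inj_def \<delta>_def fun_eq_iff split: if_splits)
  have "fun_vs.independent (\<delta> ` F)"
  proof (rule fun_vs.independent_if_scalars_zero)
    show "finite (\<delta> ` F)" using fin(2) by simp
    fix u x assume lin: "(\<Sum>y\<in>\<delta> ` F. (\<lambda>z. u y * y z)) = 0" and "x \<in> \<delta> ` F"
    then obtain f where f: "f \<in> F" "x = \<delta> f" by auto
    have "0 = (\<Sum>y\<in>\<delta> ` F. (\<lambda>z. u y * y z)) f" using lin by simp
    also have "\<dots> = (\<Sum>g\<in>F. u (\<delta> g) * \<delta> g f)"
      using fin(2) by (simp add: sum_fun_apply sum.reindex inj_on_subset[OF inj_\<delta>])
    also have "\<dots> = u (\<delta> f)"
      using fin(2) f by (simp add: \<delta>_def if_distrib cong: if_cong)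
    finally show "u x = 0" using f by simp
  qed
  then have "card (\<delta> ` F) \<le> card (w ` V)"
    using fun_vs.independent_span_bound fin(1) \<delta>_in_span by auto
  also have "\<dots> \<le> card V" using fin(1) by (rule card_image_le)
  finally show ?thesis using card_image[OF inj_on_subset[OF inj_\<delta>]] by simp
qed

section \<open>Paths, cycles and walks\<close>

lemma path_edges_conv_zip: "path_edges xs = (\<lambda>(a, b). {a, b}) ` set (zip xs (tl xs))"
  by (force simp: path_edges_def set_zip nth_tl)

lemma path_edges_Nil [simp]: "path_edges [] = {}"
  and path_edges_singleton [simp]: "path_edges [x] = {}"
  and path_edges_Cons_Cons [simp]: "path_edges (x # y # xs) = insert {x, y} (path_edges (y # xs))"
  by (simp_all add: path_edges_conv_zip)

lemma path_edges_Cons: "xs \<noteq> [] \<Longrightarrow> path_edges (x # xs) = insert {x, hd xs} (path_edges xs)"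
  by (cases xs) auto

lemma path_edges_append:
  "xs \<noteq> [] \<Longrightarrow> ys \<noteq> [] \<Longrightarrow>
     path_edges (xs @ ys) = insert {last xs, hd ys} (path_edges xs \<union> path_edges ys)"
  by (induction xs rule: induct_list012) (auto simp: path_edges_Cons)

lemma path_edges_snoc: "xs \<noteq> [] \<Longrightarrow> path_edges (xs @ [y]) = insert {last xs, y} (path_edges xs)"
  by (simp add: path_edges_append)

lemma path_edges_subset_append1: "path_edges xs \<subseteq> path_edges (xs @ ys)"
  by (cases "xs = []"; cases "ys = []") (auto simp: path_edges_append)

lemma path_edges_subset_append2: "path_edges ys \<subseteq> path_edges (xs @ ys)"
  by (cases "xs = []"; cases "ys = []") (auto simp: path_edges_append)

lemma path_edges_rev [simp]: "path_edges (rev xs) = path_edges xs"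
proof (induction xs)
  case (Cons x xs)
  then show ?case
    by (cases "xs = []") (auto simp: path_edges_snoc path_edges_Cons last_rev insert_commute)
qed simp

lemma path_edges_subset_set: "g \<in> path_edges xs \<Longrightarrow> g \<subseteq> set xs"
  by (auto simp: path_edges_def)

lemma distinct_hd_neq_last: "distinct xs \<Longrightarrow> 2 \<le> length xs \<Longrightarrow> hd xs \<noteq> last xs"
  by (cases xs) auto

lemma set_subset_path_edges: "xs \<noteq> [] \<Longrightarrow> set xs \<subseteq> insert (hd xs) (\<Union>(path_edges xs))"
  by (induction xs rule: induct_list012) auto

lemma set_butlast_tl: "distinct xs \<Longrightarrow> set (butlast (tl xs)) = set xs - {hd xs, last xs}"
proof (cases xs)
  case (Cons a ys)
  assume "distinct xs"
  then show ?thesis using Cons by (cases ys rule: rev_cases) auto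
qed simp

lemma cycle_edges_conv_path_edges:
  assumes "xs \<noteq> []"
  shows "cycle_edges xs = insert {last xs, hd xs} (path_edges xs)"
proof -
  have edge: "{xs ! i, xs ! (Suc i mod length xs)} = (if Suc i < length xs then {xs ! i, xs ! Suc i}
           else {last xs, hd xs})" if "i < length xs" for i
  proof (cases "Suc i < length xs")
    case False
    then have "Suc i = length xs" using that by simp
    then have "i = length xs - 1" "Suc i mod length xs = 0" by simp_all
    then show ?thesis using False assms by (simp add: last_conv_nth hd_conv_nth insert_commute)
  qed simp
  show ?thesis
  proof (intro set_eqI iffI)
    fix g assume "g \<in> cycle_edges xs"
    then obtain i where "i < length xs" "g = {xs ! i, xs ! (Suc i mod length xs)}"
      by (auto simp: cycle_edges_def)
    then show "g \<in> insert {last xs, hd xs} (path_edges xs)"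
      using edge[of i] by (auto simp: path_edges_def split: if_splits)
  next
    fix g assume "g \<in> insert {last xs, hd xs} (path_edges xs)"
    then consider "g = {last xs, hd xs}" | i where "Suc i < length xs" "g = {xs ! i, xs ! Suc i}"
      by (auto simp: path_edges_def)
    then show "g \<in> cycle_edges xs"
    proof cases
      case 1
      then show ?thesis using edge[of "length xs - 1"] assms
        unfolding cycle_edges_def by (intro CollectI exI[of _ "length xs - 1"]) auto
    next
      case 2
      then show ?thesis using edge[of i] unfolding cycle_edges_def by auto
    qed
  qed
qed

lemma finite_path_edges [simp]: "finite (path_edges xs)"
  by (simp add: path_edges_conv_zip)

lemma finite_cycle_edges [simp]: "finite (cycle_edges cs)"
  by (cases "cs = []") (simp_all add: cycle_edges_conv_path_edges cycle_edges_def)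

lemma closing_edge_notin_path_edges:
  assumes "is_cycle cs"
  shows "{last cs, hd cs} \<notin> path_edges cs"
proof
  obtain a ys where cs: "cs = a # ys" using assms by (cases cs) (auto simp: is_cycle_def)
  then have ys: "distinct ys" "2 \<le> length ys" "a \<notin> set ys" "ys \<noteq> []"
    using assms by (auto simp: is_cycle_def)
  assume "{last cs, hd cs} \<in> path_edges cs"
  then have "{last ys, a} = {a, hd ys} \<or> {last ys, a} \<in> path_edges ys"
    using ys(4) by (auto simp: cs path_edges_Cons)
  then show False
    using distinct_hd_neq_last[OF ys(1,2)] ys(3) path_edges_subset_set[of "{last ys, a}" ys]
    by (auto simp: doubleton_eq_iff)
qed

lemma hd_in_set_if_cycle: "is_cycle cs \<Longrightarrow> hd cs \<in> set cs"
  by (cases cs) (auto simp: is_cycle_def)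

lemma cycle_edges_eq_insert_closing_edge:
  "is_cycle cs \<Longrightarrow> cycle_edges cs = insert {last cs, hd cs} (path_edges cs)"
  by (rule cycle_edges_conv_path_edges) (auto simp: is_cycle_def)

lemma set_subset_Union_cycle_edges:
  assumes "is_cycle cs"
  shows "set cs \<subseteq> \<Union>(cycle_edges cs)"
proof -
  have "cs \<noteq> []" using assms by (auto simp: is_cycle_def)
  then show ?thesis
    using set_subset_path_edges[of cs] cycle_edges_eq_insert_closing_edge[OF assms] by auto
qed

lemma cycle_edges_subset_set: "g \<in> cycle_edges cs \<Longrightarrow> g \<subseteq> set cs"
  by (cases "cs = []") (auto simp: cycle_edges_def)

definition walk :: "'a set set \<Rightarrow> 'a list \<Rightarrow> 'a \<Rightarrow> 'a \<Rightarrow> bool" where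
  "walk F xs x y \<longleftrightarrow> xs \<noteq> [] \<and> hd xs = x \<and> last xs = y \<and> path_edges xs \<subseteq> F"

lemma walk_singleton [simp]: "walk F [x] x x"
  by (simp add: walk_def)

lemma walk_mono: "walk F xs x y \<Longrightarrow> F \<subseteq> F' \<Longrightarrow> walk F' xs x y"
  by (auto simp: walk_def)

lemma walk_snoc: "walk F xs x y \<Longrightarrow> {y, z} \<in> F \<Longrightarrow> walk F (xs @ [z]) x z"
  by (auto simp: walk_def path_edges_snoc)

lemma walk_rev: "walk F xs x y \<Longrightarrow> walk F (rev xs) y x"
  by (simp add: walk_def hd_rev last_rev)

lemma walk_append:
  assumes "walk F xs x y" and "walk F ys y z"
  shows "walk F (xs @ tl ys) x z"
proof (cases "tl ys = []")
  case True
  then show ?thesis using assms by (cases ys) (auto simp: walk_def)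
next
  case False
  then have "ys = y # tl ys" using assms(2) by (metis list.collapse walk_def)
  then have "path_edges ys = insert {y, hd (tl ys)} (path_edges (tl ys))"
    using False by (metis path_edges_Cons)
  then show ?thesis using assms False by (auto simp: walk_def path_edges_append last_tl)
qed

lemma length_append_tl: "ys \<noteq> [] \<Longrightarrow> length (xs @ tl ys) = length xs + length ys - 1"
  by (cases ys) auto

lemma walk_shortcut:
  assumes "walk F xs x y"
  shows "\<exists>ys. distinct ys \<and> walk F ys x y"
  using assms
proof (induction "length xs" arbitrary: xs rule: less_induct)
  case less
  show ?case
  proof (cases "distinct xs")
    case False
    then obtain as z bs cs where xs: "xs = as @ [z] @ bs @ [z] @ cs"
      using not_distinct_decomp by blast
    have "walk F (as @ [z] @ cs) x y"
    proof -
      have "path_edges (as @ [z] @ cs) \<subseteq> path_edges (as @ [z]) \<union> path_edges (z # cs)"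
        by (cases "as = []") (auto simp: path_edges_append)
      also have "\<dots> \<subseteq> path_edges xs"
        using path_edges_subset_append1[of "as @ [z]" "bs @ [z] @ cs"]
          path_edges_subset_append2[of "z # cs" "as @ [z] @ bs"] xs by auto
      finally show ?thesis
        using less.prems unfolding walk_def xs by (cases as; cases cs rule: rev_cases) auto
    qed
    moreover have "length (as @ [z] @ cs) < length xs" using xs by simp
    ultimately show ?thesis using less.hyps by blast
  qed (use less.prems in auto)
qed

lemma walk_if_connected_graph:
  assumes "connected_graph V E" "x \<in> V" "y \<in> V"
  shows "\<exists>xs. walk E xs x y"
proof -
  have "(\<lambda>a b. a \<in> V \<and> b \<in> V \<and> adjacent E a b)\<^sup>*\<^sup>* x y"
    using assms by (auto simp: connected_graph_def)
  then show ?thesis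
  proof (induction rule: rtranclp_induct)
    case base
    show ?case by (rule exI[of _ "[x]"]) simp
  next
    case (step y z)
    then show ?case by (auto intro: walk_snoc simp: adjacent_def)
  qed
qed

section \<open>Degrees\<close>

definition degree :: "'a set set \<Rightarrow> 'a \<Rightarrow> nat" where
  "degree F z = card {g \<in> F. z \<in> g}"

lemma degree_insert:
  assumes "finite F" "g \<notin> F"
  shows "degree (insert g F) z = degree F z + (if z \<in> g then 1 else 0)"
proof -
  have "{h \<in> insert g F. z \<in> h} = (if z \<in> g then insert g {h \<in> F. z \<in> h} else {h \<in> F. z \<in> h})"
    by auto
  then show ?thesis using assms by (simp add: degree_def)
qed

lemma degree_mono: "finite F \<Longrightarrow> A \<subseteq> F \<Longrightarrow> degree A z \<le> degree F z"
  unfolding degree_def by (rule card_mono) auto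

lemma degree_Diff:
  assumes "finite F" "A \<subseteq> F"
  shows "degree (F - A) z = degree F z - degree A z"
proof -
  have "{g \<in> F - A. z \<in> g} = {g \<in> F. z \<in> g} - {g \<in> A. z \<in> g}" by auto
  moreover have "finite {g \<in> A. z \<in> g}" "{g \<in> A. z \<in> g} \<subseteq> {g \<in> F. z \<in> g}"
    using assms by (auto intro: finite_subset)
  ultimately show ?thesis unfolding degree_def by (simp only: card_Diff_subset)
qed

lemma degree_Un_disjoint:
  assumes "finite A" "finite B" "A \<inter> B = {}"
  shows "degree (A \<union> B) z = degree A z + degree B z"
proof -
  have "{g \<in> A \<union> B. z \<in> g} = {g \<in> A. z \<in> g} \<union> {g \<in> B. z \<in> g}" by auto
  moreover have "{g \<in> A. z \<in> g} \<inter> {g \<in> B. z \<in> g} = {}" using assms(3) by auto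
  ultimately show ?thesis unfolding degree_def using assms(1,2) by (simp add: card_Un_disjoint)
qed

lemma degree_eq_0_if_notin: "(\<And>g. g \<in> F \<Longrightarrow> g \<subseteq> A) \<Longrightarrow> z \<notin> A \<Longrightarrow> degree F z = 0"
  by (force simp: degree_def card_eq_0_iff)

lemma degree_path_edges:
  assumes "distinct xs" "xs \<noteq> []"
  shows "degree (path_edges xs) z + of_bool (z = hd xs) + of_bool (z = last xs) =
           (if z \<in> set xs then 2 else 0)"
  using assms
proof (induction xs rule: induct_list012)
  case (3 x y ys)
  have "{x, y} \<notin> path_edges (y # ys)"
    using "3.prems"(1) path_edges_subset_set by fastforce
  then show ?case using "3.IH"(2) "3.prems"(1)
    by (cases "z = x"; cases "z = y") (auto simp: degree_insert)
qed (auto simp: degree_def)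

lemma degree_cycle_edges:
  assumes "is_cycle cs"
  shows "degree (cycle_edges cs) z = (if z \<in> set cs then 2 else 0)"
proof -
  have "cs \<noteq> []" "distinct cs" "2 \<le> length cs" using assms by (auto simp: is_cycle_def)
  then have "hd cs \<noteq> last cs" by (intro distinct_hd_neq_last)
  have "degree (cycle_edges cs) z =
      degree (path_edges cs) z + (if z \<in> {last cs, hd cs} then 1 else 0)"
    using assms by (simp add: cycle_edges_eq_insert_closing_edge closing_edge_notin_path_edges
        degree_insert)
  also have "\<dots> = degree (path_edges cs) z + of_bool (z = hd cs) + of_bool (z = last cs)"
    using \<open>hd cs \<noteq> last cs\<close> by auto
  finally show ?thesis using degree_path_edges[of cs z] \<open>cs \<noteq> []\<close> \<open>distinct cs\<close> by linarith
qed

lemma degree_Diff_cycle_edges: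
  "finite F \<Longrightarrow> is_cycle cs \<Longrightarrow> cycle_edges cs \<subseteq> F \<Longrightarrow>
     degree (F - cycle_edges cs) z = degree F z - (if z \<in> set cs then 2 else 0)"
  by (simp add: degree_Diff degree_cycle_edges)

definition doubletons :: "'a set set \<Rightarrow> bool" where
  "doubletons F \<longleftrightarrow> (\<forall>g\<in>F. \<exists>x y. x \<noteq> y \<and> g = {x, y})"

lemma doubletons_subset: "doubletons F \<Longrightarrow> A \<subseteq> F \<Longrightarrow> doubletons A"
  by (auto simp: doubletons_def)

lemma sum_degree_eq_sum_card_Int:
  assumes "finite C" "finite F"
  shows "(\<Sum>z\<in>C. degree F z) = (\<Sum>g\<in>F. card (g \<inter> C))"
proof -
  have "(\<Sum>z\<in>C. degree F z) = (\<Sum>z\<in>C. \<Sum>g\<in>F. if z \<in> g then 1 else 0)"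
    using assms by (simp add: degree_def sum.inter_filter[symmetric])
  also have "\<dots> = (\<Sum>g\<in>F. \<Sum>z\<in>C. if z \<in> g then 1 else 0)"
    by (rule sum.swap)
  also have "\<dots> = (\<Sum>g\<in>F. card (g \<inter> C))"
    using assms by (simp add: sum.inter_filter[symmetric] Int_def conj_commute)
  finally show ?thesis .
qed

lemma sum_degree:
  assumes "finite V" "finite F" "doubletons F" "\<And>g. g \<in> F \<Longrightarrow> g \<subseteq> V"
  shows "(\<Sum>z\<in>V. degree F z) = 2 * card F"
proof -
  have "card (g \<inter> V) = 2" if "g \<in> F" for g
    using assms(3,4) that by (force simp: doubletons_def Int_absorb2)
  then show ?thesis using assms(1,2) by (simp add: sum_degree_eq_sum_card_Int)
qed

text \<open>Handshaking inside the set of vertices reachable from \<open>a\<close>.\<close>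
lemma odd_degree_vertex_reachable:
  assumes fin: "finite F" and dbl: "doubletons F" and odd: "odd (degree F a)"
  shows "\<exists>b. b \<noteq> a \<and> odd (degree F b) \<and> (\<exists>xs. walk F xs a b)"
proof (rule ccontr)
  assume none: "\<not> ?thesis"
  define C where "C = {z. \<exists>xs. walk F xs a z}"
  have "a \<in> C" using walk_singleton[of F a] unfolding C_def by blast
  have "C \<subseteq> insert a (\<Union>F)"
  proof
    fix z assume "z \<in> C"
    then obtain xs where "xs \<noteq> []" "hd xs = a" "last xs = z" "path_edges xs \<subseteq> F"
      by (auto simp: C_def walk_def)
    then show "z \<in> insert a (\<Union>F)" using set_subset_path_edges[of xs] last_in_set by blast
  qed
  moreover have "finite (\<Union>F)" using fin dbl by (auto simp: doubletons_def)
  ultimately have "finite C" by (auto intro: finite_subset)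
  have "even (card (g \<inter> C))" if "g \<in> F" for g
  proof -
    obtain x y where g: "g = {x, y}" "x \<noteq> y" using dbl \<open>g \<in> F\<close> by (auto simp: doubletons_def)
    have "x \<in> C \<longleftrightarrow> y \<in> C"
      using walk_snoc[of F _ a x y] walk_snoc[of F _ a y x] \<open>g \<in> F\<close> g
      by (auto simp: C_def insert_commute)
    then show ?thesis using g by (cases "x \<in> C") auto
  qed
  then have "even (\<Sum>z\<in>C. degree F z)"
    by (simp add: sum_degree_eq_sum_card_Int[OF \<open>finite C\<close> fin] dvd_sum)
  moreover have "even (\<Sum>z\<in>C - {a}. degree F z)"
    using none by (intro dvd_sum) (auto simp: C_def)
  ultimately show False
    using odd \<open>a \<in> C\<close> \<open>finite C\<close> by (simp add: sum.remove)
qed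

lemma cycle_through_edge:
  assumes fin: "finite F" and dbl: "doubletons F" and even: "\<And>z. even (degree F z)"
    and ab: "{a, b} \<in> F" "a \<noteq> b"
  shows "\<exists>cs. is_cycle cs \<and> hd cs = a \<and> last cs = b \<and> path_edges cs \<subseteq> F - {{a, b}}"
proof -
  let ?F = "F - {{a, b}}"
  have deg: "degree ?F z + (if z \<in> {a, b} then 1 else 0) = degree F z" for z
    using degree_insert[of ?F "{a, b}" z] fin ab by (simp add: insert_absorb)
  have "degree ?F a + 1 = degree F a" using deg[of a] by simp
  then have "odd (degree ?F a)" using even[of a] by presburger
  moreover have "doubletons ?F" using dbl by (auto simp: doubletons_def)
  ultimately obtain b' xs where "b' \<noteq> a" "odd (degree ?F b')" and xs: "walk ?F xs a b'"
    using odd_degree_vertex_reachable[of ?F a] fin by blast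
  moreover have "b' = b"
  proof (rule ccontr)
    assume "b' \<noteq> b"
    then have "degree ?F b' = degree F b'" using deg[of b'] \<open>b' \<noteq> a\<close> by simp
    then show False using even[of b'] \<open>odd (degree ?F b')\<close> by simp
  qed
  then obtain cs where cs: "distinct cs" "walk ?F cs a b"
    using walk_shortcut[OF xs] by blast
  have "\<not> length cs \<le> 2"
  proof
    assume "length cs \<le> 2"
    moreover have "cs \<noteq> []" "hd cs = a" "last cs = b" using cs(2) by (auto simp: walk_def)
    ultimately have "cs = [a] \<or> cs = [a, b]" by (cases cs; cases "tl cs") auto
    then show False using ab cs(2) by (elim disjE) (simp_all add: walk_def)
  qed
  then have "3 \<le> length cs" by simp
  then show ?thesis using cs by (auto simp: is_cycle_def walk_def)
qed

lemma cycle_through_vertex: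
  assumes "finite F" "doubletons F" "\<And>z. even (degree F z)" "degree F v \<noteq> 0"
  shows "\<exists>cs. is_cycle cs \<and> hd cs = v \<and> cycle_edges cs \<subseteq> F"
proof -
  obtain g where "g \<in> F" "v \<in> g"
    using assms(4) by (auto simp: degree_def card_eq_0_iff)
  moreover obtain x y where "g = {x, y}" "x \<noteq> y"
    using assms(2) \<open>g \<in> F\<close> by (auto simp: doubletons_def)
  ultimately obtain b where "{v, b} \<in> F" "v \<noteq> b"
    by (metis insert_commute empty_iff insert_iff)
  then obtain cs where cs: "is_cycle cs" "hd cs = v" "last cs = b" "path_edges cs \<subseteq> F - {{v, b}}"
    using cycle_through_edge assms(1-3) by metis
  then show ?thesis
    using \<open>{v, b} \<in> F\<close>
    by (intro exI[of _ cs]) (auto simp: cycle_edges_eq_insert_closing_edge insert_commute)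
qed

lemma walk_alternates:
  fixes \<theta> :: "'a \<Rightarrow> 'k::ring_1"
  assumes "walk F xs x y" and "\<forall>g\<in>F. sum \<theta> g = 0"
  shows "\<theta> y = (-1) ^ (length xs - 1) * \<theta> x"
  using assms(1)
proof (induction xs arbitrary: x)
  case (Cons x' ys)
  show ?case
  proof (cases "ys = []")
    case False
    then have "{x, hd ys} \<in> F" "walk F ys (hd ys) y" "x' = x"
      using Cons.prems by (auto simp: walk_def path_edges_Cons)
    then have "\<theta> (hd ys) = - \<theta> x"
      using assms(2) by (cases "x = hd ys") (auto simp: add_eq_0_iff)
    then show ?thesis
      using Cons.IH[OF \<open>walk F ys (hd ys) y\<close>] False \<open>x' = x\<close> by (cases ys) auto
  qed (use Cons.prems in \<open>auto simp: walk_def\<close>)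
qed (simp add: walk_def)

text \<open>The values of \<open>\<theta>\<close> alternate in sign along the walk, but \<open>\<theta> x + \<theta> y \<noteq> 0\<close>.\<close>
lemma odd_length_walk_if_nonzero_edges:
  assumes nz: "nonzero_edges E \<theta> = {{x, y}, e}" and "x \<noteq> y" and w: "walk (E - {{x, y}, e}) xs x y"
  shows "odd (length xs)"
proof (rule ccontr)
  assume "\<not> odd (length xs)"
  moreover have "xs \<noteq> []" using w by (simp add: walk_def)
  ultimately have "odd (length xs - 1)" by (cases xs) auto
  moreover have "\<forall>g\<in>E - {{x, y}, e}. sum \<theta> g = 0"
    using nz by (auto simp: nonzero_edges_def)
  ultimately have "\<theta> y = - \<theta> x" using walk_alternates[OF w] by simp
  moreover have "sum \<theta> {x, y} \<noteq> 0" using nz by (auto simp: nonzero_edges_def)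
  ultimately show False using \<open>x \<noteq> y\<close> by simp
qed

section \<open>Graphs with the two-edge support property\<close>

lemma
  assumes "simple_graph V E"
  shows simple_graph_finite_vertices: "finite V"
    and simple_graph_edge_subset: "g \<in> E \<Longrightarrow> g \<subseteq> V"
    and simple_graph_doubletons: "doubletons E"
    and simple_graph_finite_edges: "finite E"
proof -
  show "finite V" and sub: "g \<in> E \<Longrightarrow> g \<subseteq> V" for g
    using assms by (auto simp: simple_graph_def)
  show "doubletons E" using assms unfolding simple_graph_def doubletons_def by blast
  have "E \<subseteq> Pow V" using sub by auto
  then show "finite E" using \<open>finite V\<close> by (rule finite_subset[OF _ finite_Pow_iff[THEN iffD2]])
qed

lemma set_cycle_subset_vertices:
  "simple_graph V E \<Longrightarrow> is_cycle cs \<Longrightarrow> cycle_edges cs \<subseteq> E \<Longrightarrow> set cs \<subseteq> V"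
  using set_subset_Union_cycle_edges simple_graph_edge_subset by blast

lemma card_edges_le_if_edge_square:
  assumes "simple_graph V E" and "edge_square TYPE('k::field) V E"
  shows "card E \<le> card V"
proof (rule card_le_card_if_singleton_nonzero_edges[where 'k = 'k])
  show "finite V" "finite E" using assms(1) by (simp_all add: simple_graph_finite_vertices
        simple_graph_finite_edges)
  show "finite g" if "g \<in> E" for g
    using simple_graph_doubletons[OF assms(1)] that by (auto simp: doubletons_def)
  show "\<exists>\<theta> :: 'a \<Rightarrow> 'k. in_U V \<theta> \<and> nonzero_edges E \<theta> = {f}" if "f \<in> E" for f
    using assms(2) that nonzero_edges_if_square_eq_edge_vec unfolding edge_square_def by metis
qed

lemma degree_sum_cases:
  fixes d :: "'a \<Rightarrow> nat"
  assumes "finite V" and ge2: "\<And>z. z \<in> V \<Longrightarrow> 2 \<le> d z" and sum: "(\<Sum>z\<in>V. d z) = 2 * card V + 2"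
  obtains (four) v where "v \<in> V" "d v = 4" "\<And>z. z \<in> V - {v} \<Longrightarrow> d z = 2"
    | (three) u w where "u \<in> V" "w \<in> V" "u \<noteq> w" "d u = 3" "d w = 3"
        "\<And>z. z \<in> V - {u, w} \<Longrightarrow> d z = 2"
proof -
  define h where "h z = d z - 2" for z
  have d: "d z = h z + 2" if "z \<in> V" for z using ge2[OF that] by (simp add: h_def)
  have "(\<Sum>z\<in>V. d z) = (\<Sum>z\<in>V. h z + 2)" by (rule sum.cong) (simp_all add: d)
  also have "\<dots> = (\<Sum>z\<in>V. h z) + 2 * card V" unfolding sum.distrib by simp
  finally have h2: "(\<Sum>z\<in>V. h z) = 2" using sum by simp
  then obtain u where u: "u \<in> V" "h u \<noteq> 0" by (metis sum.neutral zero_neq_numeral)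
  have hu: "h u + (\<Sum>z\<in>V - {u}. h z) = 2" using h2 assms(1) u(1) by (simp add: sum.remove)
  show ?thesis
  proof (cases "h u = 2")
    case True
    then have "\<And>z. z \<in> V - {u} \<Longrightarrow> h z = 0" using hu assms(1) by simp
    then show ?thesis using four[of u] u True d by simp
  next
    case False
    then have "(\<Sum>z\<in>V - {u}. h z) = 1" "h u = 1" using hu u(2) by linarith+
    then obtain w where w: "w \<in> V - {u}" "h w \<noteq> 0" by (metis sum.neutral zero_neq_one)
    have "h w + (\<Sum>z\<in>V - {u} - {w}. h z) = 1"
      using \<open>(\<Sum>z\<in>V - {u}. h z) = 1\<close> assms(1) w(1) by (simp add: sum.remove)
    moreover have "V - {u} - {w} = V - {u, w}" by auto
    ultimately have "h w = 1" "(\<Sum>z\<in>V - {u, w}. h z) = 0" using w(2) by auto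
    then have "h w = 1" "\<And>z. z \<in> V - {u, w} \<Longrightarrow> h z = 0" using assms(1) by simp_all
    then show ?thesis using three[of u w] u w \<open>h u = 1\<close> d by auto
  qed
qed

lemma subgraph_eq_if_degrees_saturated:
  assumes simple: "simple_graph V E" and conn: "connected_graph V E"
    and H: "v0 \<in> H" "H \<subseteq> V" and EH: "EH \<subseteq> E" "\<And>g. g \<in> EH \<Longrightarrow> g \<subseteq> H"
    and deg: "\<And>z. z \<in> H \<Longrightarrow> degree E z \<le> degree EH z"
  shows "V = H \<and> E = EH"
proof -
  have incident: "g \<in> EH" if "g \<in> E" "z \<in> H" "z \<in> g" for g z
  proof -
    have "finite {g \<in> E. z \<in> g}" using simple_graph_finite_edges[OF simple] by simp
    moreover have "{g \<in> EH. z \<in> g} \<subseteq> {g \<in> E. z \<in> g}" using EH(1) by auto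
    ultimately have "{g \<in> EH. z \<in> g} = {g \<in> E. z \<in> g}"
      using deg[OF \<open>z \<in> H\<close>] by (intro card_seteq) (auto simp: degree_def)
    then show ?thesis using that by blast
  qed
  have "y \<in> H" if "y \<in> V" for y
  proof -
    have "(\<lambda>a b. a \<in> V \<and> b \<in> V \<and> adjacent E a b)\<^sup>*\<^sup>* v0 y"
      using conn H that by (auto simp: connected_graph_def)
    then show ?thesis
    proof (induction rule: rtranclp_induct)
      case (step x y')
      then have "{x, y'} \<in> EH" using incident[of "{x, y'}" x] by (simp add: adjacent_def)
      then show ?case using EH(2) by blast
    qed (rule H(1))
  qed
  then have "V = H" using H(2) by auto
  moreover have "g \<in> EH" if "g \<in> E" for g
  proof -
    have "\<exists>x y. x \<noteq> y \<and> g = {x, y}"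
      using simple_graph_doubletons[OF simple] that by (simp add: doubletons_def)
    then obtain x y where "g = {x, y}" by blast
    then have "x \<in> H" "x \<in> g"
      using simple_graph_edge_subset[OF simple that] \<open>V = H\<close> by auto
    then show ?thesis using incident[OF that] by blast
  qed
  ultimately show ?thesis using EH(1) by auto
qed

lemma cycle_arcs:
  assumes cs: "is_cycle cs" and w: "w \<in> set cs" "w \<noteq> hd cs"
  obtains as bs where "walk (path_edges cs) as (hd cs) w"
    and "walk (cycle_edges cs - {{hd cs, hd (tl cs)}}) bs w (hd cs)"
    and "length as + length bs = length cs + 2"
proof -
  obtain ys zs where cs_eq: "cs = ys @ w # zs" using w(1) by (meson split_list)
  have "ys \<noteq> []" using w(2) cs_eq by auto
  then have hd_cs: "hd cs = hd ys" using cs_eq by simp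
  have dist: "distinct cs" "3 \<le> length cs" using cs by (auto simp: is_cycle_def)
  have "walk (path_edges cs) (ys @ [w]) (hd cs) w"
    using path_edges_subset_append1[of "ys @ [w]" zs] cs_eq hd_cs \<open>ys \<noteq> []\<close> by (simp add: walk_def)
  moreover have "walk (cycle_edges cs - {{hd cs, hd (tl cs)}}) ((w # zs) @ [hd cs]) w (hd cs)"
  proof -
    have "hd cs \<notin> set (w # zs)" using dist(1) cs_eq hd_cs \<open>ys \<noteq> []\<close> by (auto dest: hd_in_set)
    then have "{hd cs, hd (tl cs)} \<notin> path_edges (w # zs)" using path_edges_subset_set by blast
    moreover have "hd (tl cs) \<noteq> last cs" "hd cs \<noteq> last cs"
      using distinct_hd_neq_last[of "tl cs"] distinct_hd_neq_last[of cs] dist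
      by (cases cs; auto simp: last_tl)+
    ultimately have "{hd cs, hd (tl cs)} \<notin> insert {last cs, hd cs} (path_edges (w # zs))"
      by (auto simp: doubleton_eq_iff)
    moreover have "path_edges (w # zs) \<subseteq> path_edges cs"
      using path_edges_subset_append2[of "w # zs" ys] cs_eq by simp
    moreover have "path_edges ((w # zs) @ [hd cs]) = insert {last cs, hd cs} (path_edges (w # zs))"
      using path_edges_snoc[of "w # zs" "hd cs"] cs_eq by simp
    ultimately have "path_edges ((w # zs) @ [hd cs]) \<subseteq> cycle_edges cs - {{hd cs, hd (tl cs)}}"
      using cycle_edges_eq_insert_closing_edge[OF cs] by auto
    then show ?thesis by (simp add: walk_def)
  qed
  moreover have "length (ys @ [w]) + length ((w # zs) @ [hd cs]) = length cs + 2"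
    using cs_eq by simp
  ultimately show ?thesis using that by blast
qed

context
  fixes V :: "'a set" and E :: "'a set set"
  assumes simple: "simple_graph V E" and two_edge: "two_edge_support TYPE('k::field) V E"
begin

lemma odd_walk:
  assumes "{x, y} \<in> E" "e \<in> E" "e \<noteq> {x, y}" "walk (E - {{x, y}, e}) xs x y"
  shows "odd (length xs)"
proof -
  obtain \<theta> :: "'a \<Rightarrow> 'k" where "nonzero_edges E \<theta> = {{x, y}, e}"
    using two_edge assms(1-3) unfolding two_edge_support_iff by metis
  moreover have "x \<noteq> y"
    using simple_graph_doubletons[OF simple] assms(1)
    by (auto simp: doubletons_def doubleton_eq_iff)
  ultimately show ?thesis using odd_length_walk_if_nonzero_edges assms(4) by metis
qed

lemma odd_cycle:
  assumes cs: "is_cycle cs" and "cycle_edges cs \<subseteq> E" and e: "e \<in> E - cycle_edges cs"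
  shows "odd (length cs)"
proof (rule odd_walk)
  let ?c = "{hd cs, last cs}"
  have c: "cycle_edges cs = insert ?c (path_edges cs)" "?c \<notin> path_edges cs"
    using cycle_edges_eq_insert_closing_edge[OF cs] closing_edge_notin_path_edges[OF cs]
    by (simp_all add: insert_commute)
  show "?c \<in> E" "e \<noteq> ?c" using c assms(2) e by auto
  show "e \<in> E" using e by simp
  show "walk (E - {?c, e}) cs (hd cs) (last cs)"
    using cs c assms(2) e by (auto simp: walk_def is_cycle_def)
qed

lemma odd_edge_disjoint_cycles:
  assumes "is_cycle cs1" "is_cycle cs2" "cycle_edges cs1 \<union> cycle_edges cs2 \<subseteq> E"
    and "cycle_edges cs1 \<inter> cycle_edges cs2 = {}"
  shows "odd (length cs1)" "odd (length cs2)"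
proof -
  have "{last cs1, hd cs1} \<in> cycle_edges cs1" "{last cs2, hd cs2} \<in> cycle_edges cs2"
    using assms(1,2) by (simp_all add: cycle_edges_eq_insert_closing_edge)
  then show "odd (length cs1)" "odd (length cs2)" using odd_cycle assms by blast+
qed

text \<open>Otherwise the path and the two arcs of the cycle would be three walks from \<open>u\<close> to \<open>w\<close>,
  any two of which form a closed walk of odd length by \<open>odd_walk\<close>; but the three lengths
  of these closed walks add up to an even number.\<close>
lemma path_end_notin_disjoint_cycle:
  assumes P: "distinct P" "walk E P u w" "u \<noteq> w"
    and cs: "is_cycle cs" "hd cs = u" "cycle_edges cs \<subseteq> E - path_edges P"
  shows "w \<notin> set cs"
proof
  assume "w \<in> set cs"
  then obtain as bs where as: "walk (path_edges cs) as u w"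
    and bs: "walk (cycle_edges cs - {{u, hd (tl cs)}}) bs w u"
    and len: "length as + length bs = length cs + 2"
    using cycle_arcs[OF cs(1)] cs(2) P(3) by metis
  obtain P' where P_eq: "P = u # P'" and "P' \<noteq> []"
    using P by (cases P) (auto simp: walk_def split: if_split_asm)
  let ?e = "{hd P', u}" and ?c = "{u, last cs}" and ?f = "{u, hd (tl cs)}"
  have "u \<notin> set P'" using P(1) P_eq by simp
  then have "?e \<notin> path_edges P'" using path_edges_subset_set by blast
  moreover have PE: "path_edges P = insert ?e (path_edges P')"
    using P_eq \<open>P' \<noteq> []\<close> by (simp add: path_edges_Cons insert_commute)
  ultimately have P': "walk (path_edges P - {?e}) P' (hd P') w"
    using P(2) P_eq \<open>P' \<noteq> []\<close> by (auto simp: walk_def)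
  obtain t where cs_eq: "cs = u # t" "t \<noteq> []"
    using cs by (cases cs) (force simp: is_cycle_def)+
  have C: "cycle_edges cs = insert ?c (path_edges cs)" "?c \<notin> path_edges cs" "?f \<in> path_edges cs"
    using cycle_edges_eq_insert_closing_edge[OF cs(1)] closing_edge_notin_path_edges[OF cs(1)]
      cs(2) cs_eq by (auto simp: insert_commute path_edges_Cons)
  have PE_sub: "path_edges P \<subseteq> E" and e_P: "?e \<in> path_edges P"
    using P(2) PE by (auto simp: walk_def)
  then have E: "?e \<in> E" "?c \<in> E" "?f \<in> E" "?c \<noteq> ?e" "?f \<noteq> ?e" "?c \<notin> path_edges P"
    using C cs(3) by auto
  have subs: "path_edges cs \<subseteq> E - {?e, ?c}" "path_edges P - {?e} \<subseteq> E - {?e, ?c}"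
    "cycle_edges cs - {?f} \<subseteq> E - {?e, ?f}" "path_edges P - {?e} \<subseteq> E - {?e, ?f}"
    using C E cs(3) PE_sub e_P by blast+
  note walks = walk_mono[OF P' subs(2)] walk_mono[OF walk_rev[OF as] subs(1)]
    walk_mono[OF P' subs(4)] walk_mono[OF bs subs(3)]
  have "odd (length P' + length as - 1)"
    using odd_walk[OF E(1,2) E(4) walk_append[OF walks(1,2)]] as
    by (simp add: walk_def length_append_tl)
  moreover have "odd (length P' + length bs - 1)"
    using odd_walk[OF E(1,3) E(5) walk_append[OF walks(3,4)]] bs
    by (simp add: walk_def length_append_tl)
  moreover have "walk (E - {?c, ?e}) cs u (last cs)"
    using cs_eq cs(2) subs(1) by (auto simp: walk_def)
  then have "odd (length cs)" using odd_walk[of u "last cs" ?e] E by (simp add: insert_commute)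
  moreover have "length as \<noteq> 0" "length bs \<noteq> 0" using as bs by (auto simp: walk_def)
  ultimately show False using len by presburger
qed

context
  assumes conn: "connected_graph V E" and card_E: "card E = card V + 1"
begin

lemma degree_neq_0:
  assumes "z \<in> V"
  shows "degree E z \<noteq> 0"
proof -
  have "E \<noteq> {}" using card_E by auto
  then obtain g where "g \<in> E" by blast
  moreover have "\<exists>x y. x \<noteq> y \<and> g = {x, y}"
    using simple_graph_doubletons[OF simple] \<open>g \<in> E\<close> by (simp add: doubletons_def)
  ultimately obtain x y where "x \<noteq> y" "{x, y} \<subseteq> V"
    using simple_graph_edge_subset[OF simple] by blast
  then obtain z' where "z' \<in> V" "z' \<noteq> z" by blast
  then obtain xs where xs: "walk E xs z z'"
    using walk_if_connected_graph[OF conn assms] by blast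
  then obtain ys where "xs = z # ys" "ys \<noteq> []"
    using \<open>z' \<noteq> z\<close> by (cases xs) (auto simp: walk_def split: if_split_asm)
  then have "{z, hd ys} \<in> {g \<in> E. z \<in> g}" using xs by (auto simp: walk_def path_edges_Cons)
  then show ?thesis using simple_graph_finite_edges[OF simple] by (auto simp: degree_def)
qed

text \<open>At a vertex \<open>z\<close> whose only edge is \<open>e\<close>, the functions with nonzero edges \<open>{e, f}\<close>
  may be taken to vanish at \<open>z\<close>; then \<open>card_le_card_if_singleton_nonzero_edges\<close> applies to
  \<open>G - z\<close> and gives \<open>card E - 1 \<le> card V - 1\<close>.\<close>
lemma degree_neq_1: "degree E z \<noteq> 1"
proof
  assume "degree E z = 1"
  then obtain e where e: "{g \<in> E. z \<in> g} = {e}"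
    unfolding degree_def by (rule card_1_singletonE)
  then have "e \<in> {g \<in> E. z \<in> g}" by simp
  then have "e \<in> E" "z \<in> V" using simple_graph_edge_subset[OF simple] by auto
  have "card (E - {e}) \<le> card (V - {z})"
  proof (rule card_le_card_if_singleton_nonzero_edges[where 'k = 'k])
    show "finite (V - {z})" "finite (E - {e})"
      using simple by (simp_all add: simple_graph_finite_vertices simple_graph_finite_edges)
    show "finite g" if "g \<in> E - {e}" for g
      using simple_graph_doubletons[OF simple] that by (auto simp: doubletons_def)
    fix f assume f: "f \<in> E - {e}"
    then obtain \<theta> :: "'a \<Rightarrow> 'k" where \<theta>: "in_U V \<theta>" "nonzero_edges E \<theta> = {e, f}"
      using two_edge \<open>e \<in> E\<close> unfolding two_edge_support_iff by blast
    define \<theta>' where "\<theta>' = \<theta>(z := 0)"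
    have same: "sum \<theta>' g = sum \<theta> g" if "g \<in> E - {e}" for g
    proof (rule sum.cong)
      have "z \<notin> g" using that e by blast
      then show "\<theta>' x = \<theta> x" if "x \<in> g" for x using that by (auto simp: \<theta>'_def)
    qed simp
    have "nonzero_edges (E - {e}) \<theta>' = {g \<in> E - {e}. sum \<theta> g \<noteq> 0}"
      unfolding nonzero_edges_def by (rule Collect_cong) (metis same)
    also have "\<dots> = nonzero_edges E \<theta> - {e}" unfolding nonzero_edges_def by blast
    also have "\<dots> = {f}" using \<theta>(2) f by (simp add: insert_Diff_if)
    finally have "nonzero_edges (E - {e}) \<theta>' = {f}" .
    moreover have "in_U (V - {z}) \<theta>'" using \<theta>(1) by (simp add: in_U_def \<theta>'_def)
    ultimately show "\<exists>\<theta> :: 'a \<Rightarrow> 'k. in_U (V - {z}) \<theta> \<and> nonzero_edges (E - {e}) \<theta> = {f}"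
      by blast
  qed
  moreover have "card (E - {e}) = card V" using card_E \<open>e \<in> E\<close> by simp
  moreover have "card (V - {z}) < card V"
    using \<open>z \<in> V\<close> simple_graph_finite_vertices[OF simple] by (rule card_Diff1_less[rotated])
  ultimately show False by simp
qed

lemma paddle_of_cycles_at_vertex:
  assumes cs: "is_cycle cs1" "is_cycle cs2" "cycle_edges cs1 \<union> cycle_edges cs2 \<subseteq> E"
    and disj: "cycle_edges cs1 \<inter> cycle_edges cs2 = {}" and meet: "set cs1 \<inter> set cs2 = {v}"
    and deg: "\<And>z. z \<in> set cs1 \<union> set cs2 \<Longrightarrow> degree E z \<le> (if z = v then 4 else 2)"
  shows "doubly_odd_paddle V E"
proof -
  let ?C1 = "cycle_edges cs1" and ?C2 = "cycle_edges cs2"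
  have "V = set cs1 \<union> set cs2 \<and> E = ?C1 \<union> ?C2"
  proof (rule subgraph_eq_if_degrees_saturated[OF simple conn])
    fix z assume z: "z \<in> set cs1 \<union> set cs2"
    have "degree (?C1 \<union> ?C2) z = degree ?C1 z + degree ?C2 z"
      using disj by (simp add: degree_Un_disjoint)
    then show "degree E z \<le> degree (?C1 \<union> ?C2) z"
      using z deg[OF z] meet degree_cycle_edges[OF cs(1), of z] degree_cycle_edges[OF cs(2), of z]
      by (cases "z = v") auto
  qed (use cs meet set_cycle_subset_vertices[OF simple] in \<open>auto dest: cycle_edges_subset_set\<close>)
  then show ?thesis
    unfolding doubly_odd_paddle_def
    using cs disj meet odd_edge_disjoint_cycles[OF cs disj] by blast
qed

lemma paddle_if_degree_4:
  assumes v: "v \<in> V" "degree E v = 4" and two: "\<And>z. z \<in> V - {v} \<Longrightarrow> degree E z = 2"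
  shows "doubly_odd_paddle V E"
proof -
  note fin = simple_graph_finite_edges[OF simple] and dbl = simple_graph_doubletons[OF simple]
  have even: "even (degree E z)" for z
    using v two degree_eq_0_if_notin[OF simple_graph_edge_subset[OF simple], where z = z]
    by (cases "z \<in> V"; cases "z = v") auto
  moreover have "degree E v \<noteq> 0" using v by simp
  ultimately obtain cs1 where cs1: "is_cycle cs1" "hd cs1 = v" "cycle_edges cs1 \<subseteq> E"
    using cycle_through_vertex[OF fin dbl] by blast
  let ?F = "E - cycle_edges cs1"
  have "v \<in> set cs1" "set cs1 \<subseteq> V"
    using hd_in_set_if_cycle[OF cs1(1)] cs1 set_cycle_subset_vertices[OF simple] by simp_all
  have degF: "degree ?F z = degree E z - (if z \<in> set cs1 then 2 else 0)" for z
    by (rule degree_Diff_cycle_edges[OF fin cs1(1,3)])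
  have "even (degree ?F z)" for z using degF[of z] even[of z] by auto
  moreover have "degree ?F v \<noteq> 0" using degF[of v] v \<open>v \<in> set cs1\<close> by simp
  moreover have "doubletons ?F" using dbl by (rule doubletons_subset) blast
  ultimately obtain cs2 where cs2: "is_cycle cs2" "hd cs2 = v" "cycle_edges cs2 \<subseteq> ?F"
    using cycle_through_vertex[of ?F v] fin by blast
  have "z = v" if z: "z \<in> set cs1" "z \<in> set cs2" for z
  proof (rule ccontr)
    assume "z \<noteq> v"
    then have "degree ?F z = 0" using degF[of z] two[of z] z \<open>set cs1 \<subseteq> V\<close> by auto
    moreover have "degree (cycle_edges cs2) z \<le> degree ?F z"
      using cs2(3) fin by (intro degree_mono) auto
    ultimately show False using degree_cycle_edges[OF cs2(1), of z] z(2) by simp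
  qed
  then have "set cs1 \<inter> set cs2 = {v}"
    using \<open>v \<in> set cs1\<close> hd_in_set_if_cycle[OF cs2(1)] cs2(2) by blast
  moreover have "set cs2 \<subseteq> V" using set_cycle_subset_vertices[OF simple cs2(1)] cs2(3) by blast
  then have "degree E z \<le> (if z = v then 4 else 2)" if "z \<in> set cs1 \<union> set cs2" for z
    using that v two[of z] \<open>set cs1 \<subseteq> V\<close> by auto
  ultimately show ?thesis
    using paddle_of_cycles_at_vertex[OF cs1(1) cs2(1)] cs1(3) cs2(3) by blast
qed

lemma degree_on_cycle_off_path:
  assumes deg: "\<And>z. degree (E - path_edges P) z \<le> (if z \<in> set P - {u, w} then 0 else 2)"
    and cs: "is_cycle cs" "cycle_edges cs \<subseteq> E - path_edges P" and "z \<in> set cs"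
  shows "degree (E - path_edges P) z = 2" "z \<notin> set P - {u, w}"
proof -
  have "degree (cycle_edges cs) z \<le> degree (E - path_edges P) z"
    using simple_graph_finite_edges[OF simple] cs(2) by (intro degree_mono) auto
  then show "degree (E - path_edges P) z = 2" "z \<notin> set P - {u, w}"
    using deg[of z] degree_cycle_edges[OF cs(1), of z] \<open>z \<in> set cs\<close> by (auto split: if_splits)
qed

lemma saturated_by_cycles_and_path:
  assumes P: "walk E P u w"
    and cs: "is_cycle cs1" "hd cs1 = u" "is_cycle cs2" "hd cs2 = w"
    and sub: "cycle_edges cs1 \<union> cycle_edges cs2 \<subseteq> E - path_edges P"
    and disj: "cycle_edges cs1 \<inter> cycle_edges cs2 = {}"
    and deg: "\<And>z. degree (E - path_edges P) z \<le> (if z \<in> set P - {u, w} then 0 else 2)"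
  shows "V = set cs1 \<union> set cs2 \<union> set P \<and> E = cycle_edges cs1 \<union> cycle_edges cs2 \<union> path_edges P"
proof (rule subgraph_eq_if_degrees_saturated[OF simple conn])
  let ?C1 = "cycle_edges cs1" and ?C2 = "cycle_edges cs2" and ?P = "path_edges P"
    and ?F = "E - path_edges P"
  note fin = simple_graph_finite_edges[OF simple]
  have C: "?C1 \<subseteq> ?F" "?C2 \<subseteq> ?F" and "?P \<subseteq> E" using sub P by (auto simp: walk_def)
  fix z assume z: "z \<in> set cs1 \<union> set cs2 \<union> set P"
  have "degree E z = degree ?F z + degree ?P z"
    using degree_Diff[OF fin \<open>?P \<subseteq> E\<close>, of z] degree_mono[OF fin \<open>?P \<subseteq> E\<close>, of z] by simp
  moreover have "(?C1 \<union> ?C2) \<inter> ?P = {}" using sub by blast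
  then have "degree (?C1 \<union> ?C2 \<union> ?P) z = degree ?C1 z + degree ?C2 z + degree ?P z"
    using disj by (simp add: degree_Un_disjoint)
  moreover have "degree ?F z \<le> degree ?C1 z + degree ?C2 z"
    using z degree_on_cycle_off_path(1)[OF deg cs(1) C(1), of z]
      degree_on_cycle_off_path(1)[OF deg cs(3) C(2), of z] deg[of z]
      hd_in_set_if_cycle[OF cs(1)] hd_in_set_if_cycle[OF cs(3)] cs(2,4)
      degree_cycle_edges[OF cs(1), of z] degree_cycle_edges[OF cs(3), of z]
    by (auto split: if_splits)
  ultimately show "degree E z \<le> degree (?C1 \<union> ?C2 \<union> ?P) z" by simp
next
  show "u \<in> set cs1 \<union> set cs2 \<union> set P" using hd_in_set_if_cycle[OF cs(1)] cs(2) by simp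
  have "set cs1 \<subseteq> V" "set cs2 \<subseteq> V"
    using set_cycle_subset_vertices[OF simple] cs(1,3) sub by blast+
  moreover have "\<Union>(path_edges P) \<subseteq> V"
    using P simple_graph_edge_subset[OF simple] by (auto simp: walk_def)
  moreover have "set P \<subseteq> insert u (\<Union>(path_edges P))"
    using set_subset_path_edges[of P] P by (simp add: walk_def)
  ultimately show "set cs1 \<union> set cs2 \<union> set P \<subseteq> V"
    using cs(2) hd_in_set_if_cycle[OF cs(1)] by blast
  show "cycle_edges cs1 \<union> cycle_edges cs2 \<union> path_edges P \<subseteq> E" using sub P by (auto simp: walk_def)
  show "g \<subseteq> set cs1 \<union> set cs2 \<union> set P"
    if "g \<in> cycle_edges cs1 \<union> cycle_edges cs2 \<union> path_edges P" for g
    using that cycle_edges_subset_set path_edges_subset_set by blast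
qed

lemma paddle_of_cycles_and_path:
  assumes P: "distinct P" "walk E P u w" "u \<noteq> w"
    and cs: "is_cycle cs1" "hd cs1 = u" "is_cycle cs2" "hd cs2 = w"
    and sub: "cycle_edges cs1 \<union> cycle_edges cs2 \<subseteq> E - path_edges P"
    and disj: "cycle_edges cs1 \<inter> cycle_edges cs2 = {}" "set cs1 \<inter> set cs2 = {}"
    and deg: "\<And>z. degree (E - path_edges P) z \<le> (if z \<in> set P - {u, w} then 0 else 2)"
  shows "doubly_odd_paddle V E"
proof -
  have "\<forall>x\<in>set (butlast (tl P)). x \<notin> set cs1 \<and> x \<notin> set cs2"
    using set_butlast_tl[OF P(1)] P(2) sub degree_on_cycle_off_path(2)[OF deg cs(1)]
      degree_on_cycle_off_path(2)[OF deg cs(3)]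
    by (auto simp: walk_def)
  moreover have "2 \<le> length P"
    using P(2,3) by (cases P) (auto simp: walk_def Suc_le_eq split: if_splits)
  moreover have "odd (length cs1)" "odd (length cs2)"
    using odd_edge_disjoint_cycles[OF cs(1,3) _ disj(1)] sub by blast+
  moreover have "hd P \<in> set cs1" "last P \<in> set cs2"
    using P(2) hd_in_set_if_cycle[OF cs(1)] hd_in_set_if_cycle[OF cs(3)] cs(2,4)
    by (auto simp: walk_def)
  ultimately show ?thesis
    using saturated_by_cycles_and_path[OF P(2) cs sub disj(1) deg] cs(1,3) disj P(1)
    unfolding doubly_odd_paddle_def by blast
qed

lemma degree_off_path:
  assumes u: "u \<in> V" "degree E u = 3" and w: "w \<in> V" "degree E w = 3" "u \<noteq> w"
    and two: "\<And>z. z \<in> V - {u, w} \<Longrightarrow> degree E z = 2"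
    and P: "distinct P" "walk E P u w"
  shows "degree (E - path_edges P) z = (if z \<in> set P - {u, w} then 0 else if z \<in> V then 2 else 0)"
proof -
  have "set P \<subseteq> V"
    using P(2) set_subset_path_edges[of P] simple_graph_edge_subset[OF simple] u(1)
    by (auto simp: walk_def)
  have "degree (E - path_edges P) z = degree E z - degree (path_edges P) z"
    using P(2) simple_graph_finite_edges[OF simple] by (simp add: degree_Diff walk_def)
  moreover have "degree (path_edges P) z + of_bool (z = u) + of_bool (z = w) =
      (if z \<in> set P then 2 else 0)"
    using degree_path_edges[OF P(1)] P(2) by (auto simp: walk_def)
  ultimately show ?thesis
    using u w two[of z] \<open>set P \<subseteq> V\<close>
      degree_eq_0_if_notin[OF simple_graph_edge_subset[OF simple], where z = z]
    by (auto split: if_splits)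
qed

lemma paddle_if_degree_3:
  assumes u: "u \<in> V" "degree E u = 3" and w: "w \<in> V" "degree E w = 3" "u \<noteq> w"
    and two: "\<And>z. z \<in> V - {u, w} \<Longrightarrow> degree E z = 2"
  shows "doubly_odd_paddle V E"
proof -
  note fin = simple_graph_finite_edges[OF simple] and dbl = simple_graph_doubletons[OF simple]
  obtain W where W: "walk E W u w" using walk_if_connected_graph[OF conn u(1) w(1)] by blast
  obtain P where P: "distinct P" "walk E P u w" using walk_shortcut[OF W] by blast
  let ?F = "E - path_edges P"
  note degF = degree_off_path[OF u w two P]
  have "even (degree ?F z)" for z using degF[of z] by simp
  moreover have "degree ?F u \<noteq> 0" using degF[of u] u by simp
  moreover have "doubletons ?F" using dbl by (rule doubletons_subset) blast
  ultimately obtain cs1 where cs1: "is_cycle cs1" "hd cs1 = u" "cycle_edges cs1 \<subseteq> ?F"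
    using cycle_through_vertex[of ?F u] fin by blast
  have "w \<notin> set cs1" by (rule path_end_notin_disjoint_cycle[OF P w(3) cs1])
  let ?F' = "?F - cycle_edges cs1"
  have degF': "degree ?F' z = degree ?F z - (if z \<in> set cs1 then 2 else 0)" for z
    using fin by (intro degree_Diff_cycle_edges cs1) auto
  have "even (degree ?F' z)" for z using degF'[of z] degF[of z] by auto
  moreover have "degree ?F' w \<noteq> 0" using degF'[of w] degF[of w] \<open>w \<notin> set cs1\<close> w by simp
  moreover have "doubletons ?F'" using dbl by (rule doubletons_subset) blast
  ultimately obtain cs2 where cs2: "is_cycle cs2" "hd cs2 = w" "cycle_edges cs2 \<subseteq> ?F'"
    using cycle_through_vertex[of ?F' w] fin by blast
  have "z \<notin> set cs2" if "z \<in> set cs1" for z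
  proof
    assume "z \<in> set cs2"
    have "degree (cycle_edges cs1) z \<le> degree ?F z" using cs1(3) fin by (intro degree_mono) auto
    then have "degree ?F' z = 0"
      using degF'[of z] degF[of z] degree_cycle_edges[OF cs1(1), of z] that
      by (auto split: if_splits)
    moreover have "degree (cycle_edges cs2) z \<le> degree ?F' z"
      using cs2(3) fin by (intro degree_mono) auto
    ultimately show False using degree_cycle_edges[OF cs2(1), of z] \<open>z \<in> set cs2\<close> by simp
  qed
  then have "set cs1 \<inter> set cs2 = {}" by blast
  moreover have "cycle_edges cs1 \<union> cycle_edges cs2 \<subseteq> ?F" "cycle_edges cs1 \<inter> cycle_edges cs2 = {}"
    using cs1(3) cs2(3) by blast+
  moreover have "degree ?F z \<le> (if z \<in> set P - {u, w} then 0 else 2)" for z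
    using degF[of z] by simp
  ultimately show ?thesis using paddle_of_cycles_and_path[OF P w(3) cs1(1,2) cs2(1,2)] by blast
qed

lemma paddle_if_two_edge_support: "doubly_odd_paddle V E"
proof (rule degree_sum_cases)
  show "finite V" using simple by (rule simple_graph_finite_vertices)
  show "2 \<le> degree E z" if "z \<in> V" for z
    using degree_neq_0[OF that] degree_neq_1[of z] by linarith
  show "(\<Sum>z\<in>V. degree E z) = 2 * card V + 2"
    using sum_degree[OF simple_graph_finite_vertices[OF simple] simple_graph_finite_edges[OF simple]
        simple_graph_doubletons[OF simple]] simple_graph_edge_subset[OF simple] card_E
    by simp
  show ?thesis if "v \<in> V" "degree E v = 4" "\<And>z. z \<in> V - {v} \<Longrightarrow> degree E z = 2" for v
    using paddle_if_degree_4[OF that] .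
  show ?thesis if "u \<in> V" "w \<in> V" "u \<noteq> w" "degree E u = 3" "degree E w = 3"
    "\<And>z. z \<in> V - {u, w} \<Longrightarrow> degree E z = 2" for u w
    using paddle_if_degree_3 that by blast
qed

end

end

section \<open>Doubly-odd paddles have the two-edge support property\<close>

definition position :: "'a list \<Rightarrow> 'a \<Rightarrow> nat" where
  "position xs z = (THE i. i < length xs \<and> xs ! i = z)"

lemma position_nth: "distinct xs \<Longrightarrow> i < length xs \<Longrightarrow> position xs (xs ! i) = i"
  unfolding position_def by (rule the_equality) (auto simp: nth_eq_iff_index_eq)

definition cycle_edge :: "'a list \<Rightarrow> nat \<Rightarrow> 'a set" where
  "cycle_edge c s = {c ! s, c ! (Suc s mod length c)}"

definition path_edge :: "'a list \<Rightarrow> nat \<Rightarrow> 'a set" where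
  "path_edge p t = {p ! t, p ! Suc t}"

lemma cycle_edges_conv_cycle_edge: "cycle_edges c = {cycle_edge c s | s. s < length c}"
  by (simp add: cycle_edges_def cycle_edge_def)

lemma path_edges_conv_path_edge: "path_edges p = {path_edge p t | t. Suc t < length p}"
  by (simp add: path_edges_def path_edge_def)

lemma cycle_edge_neq:
  assumes "is_cycle c" "s < length c"
  shows "c ! s \<noteq> c ! (Suc s mod length c)"
proof -
  have "Suc s mod length c < length c" "Suc s mod length c \<noteq> s"
    using assms by (auto simp: is_cycle_def mod_Suc)
  then show ?thesis using assms by (simp add: is_cycle_def nth_eq_iff_index_eq)
qed

definition alternating :: "nat set \<Rightarrow> nat \<Rightarrow> 'k::field" where
  "alternating A s = (if s \<in> A then (-1) ^ s else 0)"

lemma alternating_step: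
  "alternating A s + alternating A (Suc s) \<noteq> (0::'k::field) \<longleftrightarrow> (s \<in> A \<longleftrightarrow> Suc s \<notin> A)"
  by (simp add: alternating_def)

definition sign_flip :: "nat \<Rightarrow> nat \<Rightarrow> 'k::field" where
  "sign_flip i s = (if s \<le> i then (-1) ^ s else - ((-1) ^ s))"

text \<open>Around a cycle of odd length \<open>m\<close>, consecutive values of \<open>sign_flip i\<close> cancel on every
  step except the one leaving \<open>i\<close>; this includes the wrap-around step from \<open>m - 1\<close> to \<open>0\<close>,
  as \<open>m - 1\<close> is even.\<close>
lemma sign_flip_step:
  assumes "(2::'k::field) \<noteq> 0" "odd m" "i < m" "s < m"
  shows "sign_flip i s + sign_flip i (Suc s mod m) \<noteq> (0::'k) \<longleftrightarrow> s = i"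
proof (cases "Suc s < m")
  case True
  then show ?thesis using assms(1) by (auto simp: sign_flip_def)
next
  case False
  then have "Suc s = m" using assms(4) by simp
  then have "s = m - 1" "Suc s mod m = 0" "even s" using assms(2) by auto
  then show ?thesis using assms(1,3) by (auto simp: sign_flip_def)
qed

lemma alternating_cycle_step:
  assumes "i < i'" "i' < m" "s < m"
  shows "alternating {i<..i'} s + alternating {i<..i'} (Suc s mod m) \<noteq> (0::'k::field) \<longleftrightarrow>
           s = i \<or> s = i'"
proof (cases "Suc s < m")
  case True
  then show ?thesis using assms alternating_step[of "{i<..i'}" s] by auto
next
  case False
  then have "Suc s = m" using assms(3) by simp
  then have "s = m - 1" "Suc s mod m = 0" by auto
  then show ?thesis using assms by (auto simp: alternating_def)
qed

lemma setcompr_cong: "(\<And>s. P s \<Longrightarrow> Q s \<longleftrightarrow> R s) \<Longrightarrow> {f s | s. P s \<and> Q s} = {f s | s. P s \<and> R s}"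
  by blast

text \<open>The function on the vertices with coordinates \<open>a\<close>, \<open>p\<close>, \<open>b\<close> along \<open>c1\<close>, \<open>ps\<close>, \<open>c2\<close>;
  where the lists share a vertex the first one wins, so the coordinates have to agree there.\<close>
definition weights :: "'a list \<Rightarrow> 'a list \<Rightarrow> 'a list \<Rightarrow> (nat \<Rightarrow> 'k) \<Rightarrow> (nat \<Rightarrow> 'k) \<Rightarrow> (nat \<Rightarrow> 'k) \<Rightarrow>
    'a \<Rightarrow> 'k::zero" where
  "weights c1 ps c2 a p b z =
     (if z \<in> set c1 then a (position c1 z) else if z \<in> set ps then p (position ps z)
      else if z \<in> set c2 then b (position c2 z) else 0)"

lemma in_U_weights: "in_U (set c1 \<union> set c2 \<union> set ps) (weights c1 ps c2 a p b)"
  by (simp add: in_U_def weights_def)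

text \<open>A doubly-odd paddle, with both cycles rotated to start at the ends of the path \<open>ps\<close>;
  two cycles sharing a vertex \<open>v\<close> are the case \<open>ps = [v]\<close>.\<close>
locale paddle_lists =
  fixes c1 ps c2 :: "'a list"
  assumes cycle1: "is_cycle c1" and odd1: "odd (length c1)"
    and cycle2: "is_cycle c2" and odd2: "odd (length c2)"
    and distinct_ps: "distinct ps" and ps_ne: "ps \<noteq> []"
    and hd_c1: "hd c1 = hd ps" and hd_c2: "hd c2 = last ps"
    and meet1: "set ps \<inter> set c1 = {hd ps}" and meet2: "set ps \<inter> set c2 = {last ps}"
    and meet12: "set c1 \<inter> set c2 \<subseteq> set ps"
begin

abbreviation edges :: "'a set set" where
  "edges \<equiv> cycle_edges c1 \<union> cycle_edges c2 \<union> path_edges ps"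

abbreviation vertices :: "'a set" where
  "vertices \<equiv> set c1 \<union> set c2 \<union> set ps"

lemma c1_ne: "c1 \<noteq> []" and c2_ne: "c2 \<noteq> []"
  using cycle1 cycle2 by (auto simp: is_cycle_def)

lemma weights_c1: "s < length c1 \<Longrightarrow> weights c1 ps c2 a p b (c1 ! s) = a s"
  using cycle1 by (simp add: weights_def position_nth is_cycle_def)

lemma weights_ps:
  assumes "a 0 = p 0" "t < length ps"
  shows "weights c1 ps c2 a p b (ps ! t) = p t"
proof (cases "t = 0")
  case True
  have "ps ! 0 = c1 ! 0" using hd_c1 ps_ne c1_ne by (simp add: hd_conv_nth)
  moreover have "weights c1 ps c2 a p b (c1 ! 0) = a 0" using c1_ne by (intro weights_c1) simp
  ultimately show ?thesis using True assms(1) by simp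
next
  case False
  then have "ps ! t \<noteq> ps ! 0"
    using distinct_ps ps_ne assms(2) nth_eq_iff_index_eq[of ps t 0] by auto
  then have "ps ! t \<noteq> hd ps" using ps_ne by (simp add: hd_conv_nth)
  moreover have "ps ! t \<in> set ps" using assms(2) by simp
  ultimately have "ps ! t \<notin> set c1" using meet1 by blast
  then show ?thesis using assms(2) distinct_ps by (simp add: weights_def position_nth)
qed

lemma weights_c2:
  assumes "a 0 = p 0" "p (length ps - 1) = b 0" "s < length c2"
  shows "weights c1 ps c2 a p b (c2 ! s) = b s"
proof (cases "s = 0")
  case True
  have "c2 ! 0 = ps ! (length ps - 1)" using hd_c2 ps_ne c2_ne
    by (simp add: hd_conv_nth last_conv_nth)
  then show ?thesis using True assms weights_ps[of a p "length ps - 1"] ps_ne by simp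
next
  case False
  then have "c2 ! s \<noteq> c2 ! 0"
    using cycle2 c2_ne assms(3) nth_eq_iff_index_eq[of c2 s 0] by (auto simp: is_cycle_def)
  then have "c2 ! s \<noteq> last ps" using hd_c2 c2_ne by (simp add: hd_conv_nth)
  moreover have "c2 ! s \<in> set c2" using assms(3) by simp
  ultimately have "c2 ! s \<notin> set ps" "c2 ! s \<notin> set c1" using meet2 meet12 by blast+
  then show ?thesis using assms(3) cycle2 by (simp add: weights_def position_nth is_cycle_def)
qed

lemma nonzero_edges_weights:
  fixes a p b :: "nat \<Rightarrow> 'k::field"
  assumes "a 0 = p 0" "p (length ps - 1) = b 0"
  shows "nonzero_edges edges (weights c1 ps c2 a p b) =
     {cycle_edge c1 s | s. s < length c1 \<and> a s + a (Suc s mod length c1) \<noteq> 0} \<union>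
     {cycle_edge c2 s | s. s < length c2 \<and> b s + b (Suc s mod length c2) \<noteq> 0} \<union>
     {path_edge ps t | t. Suc t < length ps \<and> p t + p (Suc t) \<noteq> 0}"
proof -
  let ?\<theta> = "weights c1 ps c2 a p b"
  have s1: "sum ?\<theta> (cycle_edge c1 s) = a s + a (Suc s mod length c1)" if "s < length c1" for s
  proof -
    have "Suc s mod length c1 < length c1" using that by (auto intro: mod_less_divisor)
    then show ?thesis
      using that cycle_edge_neq[OF cycle1 that] weights_c1[of s a p b]
        weights_c1[of "Suc s mod length c1" a p b] by (simp add: cycle_edge_def)
  qed
  have s2: "sum ?\<theta> (cycle_edge c2 s) = b s + b (Suc s mod length c2)" if "s < length c2" for s
  proof -
    have "Suc s mod length c2 < length c2" using that by (auto intro: mod_less_divisor)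
    then show ?thesis
      using that cycle_edge_neq[OF cycle2 that] weights_c2[of a p b s, OF assms]
        weights_c2[of a p b "Suc s mod length c2", OF assms] by (simp add: cycle_edge_def)
  qed
  have sp: "sum ?\<theta> (path_edge ps t) = p t + p (Suc t)" if "Suc t < length ps" for t
    using that distinct_ps weights_ps[of a p _ b, OF assms(1)]
    by (simp add: path_edge_def nth_eq_iff_index_eq)
  have "nonzero_edges edges ?\<theta> = {g \<in> cycle_edges c1. sum ?\<theta> g \<noteq> 0} \<union>
      {g \<in> cycle_edges c2. sum ?\<theta> g \<noteq> 0} \<union> {g \<in> path_edges ps. sum ?\<theta> g \<noteq> 0}"
    unfolding nonzero_edges_def by blast
  also have "{g \<in> cycle_edges c1. sum ?\<theta> g \<noteq> 0} =
      {cycle_edge c1 s | s. s < length c1 \<and> a s + a (Suc s mod length c1) \<noteq> 0}"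
    unfolding cycle_edges_conv_cycle_edge by (auto simp: s1 cong: conj_cong)
  also have "{g \<in> cycle_edges c2. sum ?\<theta> g \<noteq> 0} =
      {cycle_edge c2 s | s. s < length c2 \<and> b s + b (Suc s mod length c2) \<noteq> 0}"
    unfolding cycle_edges_conv_cycle_edge by (auto simp: s2 cong: conj_cong)
  also have "{g \<in> path_edges ps. sum ?\<theta> g \<noteq> 0} =
      {path_edge ps t | t. Suc t < length ps \<and> p t + p (Suc t) \<noteq> 0}"
    unfolding path_edges_conv_path_edge by (auto simp: sp cong: conj_cong)
  finally show ?thesis .
qed

text \<open>The witnesses: \<open>alternating\<close> on an interval has nonzero sums exactly on the two edges
  leaving it, and \<open>sign_flip i\<close> around an odd cycle exactly on its edge \<open>i\<close>.\<close>
lemma two_cycle_edges_c1: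
  assumes "i < i'" "i' < length c1"
  shows "\<exists>\<theta> :: 'a \<Rightarrow> 'k::field. in_U vertices \<theta> \<and>
           nonzero_edges edges \<theta> = {cycle_edge c1 i, cycle_edge c1 i'}"
proof -
  let ?a = "alternating {i<..i'} :: nat \<Rightarrow> 'k"
  have "?a 0 = 0" by (simp add: alternating_def)
  then have "nonzero_edges edges (weights c1 ps c2 ?a (\<lambda>_. 0) (\<lambda>_. 0)) =
      {cycle_edge c1 s | s. s < length c1 \<and> ?a s + ?a (Suc s mod length c1) \<noteq> 0}"
    using nonzero_edges_weights[of ?a "\<lambda>_. 0" "\<lambda>_. 0"] by simp
  also have "\<dots> = {cycle_edge c1 s | s. s < length c1 \<and> (s = i \<or> s = i')}"
    using alternating_cycle_step[OF assms] by (rule setcompr_cong)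
  also have "\<dots> = {cycle_edge c1 i, cycle_edge c1 i'}" using assms by auto
  finally show ?thesis using in_U_weights[of c1 c2 ps ?a "\<lambda>_. 0" "\<lambda>_. 0"] by blast
qed

lemma two_path_edges:
  assumes "t < t'" "Suc t' < length ps"
  shows "\<exists>\<theta> :: 'a \<Rightarrow> 'k::field. in_U vertices \<theta> \<and>
           nonzero_edges edges \<theta> = {path_edge ps t, path_edge ps t'}"
proof -
  let ?p = "alternating {t<..t'} :: nat \<Rightarrow> 'k"
  have "?p 0 = 0" "?p (length ps - 1) = 0" using assms by (auto simp: alternating_def)
  then have "nonzero_edges edges (weights c1 ps c2 (\<lambda>_. 0) ?p (\<lambda>_. 0)) =
      {path_edge ps u | u. Suc u < length ps \<and> ?p u + ?p (Suc u) \<noteq> 0}"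
    using nonzero_edges_weights[of "\<lambda>_. 0" ?p "\<lambda>_. 0"] by simp
  also have "\<dots> = {path_edge ps u | u. Suc u < length ps \<and> (u = t \<or> u = t')}"
    using assms by (intro setcompr_cong) (auto simp: alternating_step)
  also have "\<dots> = {path_edge ps t, path_edge ps t'}" using assms by auto
  finally show ?thesis using in_U_weights[of c1 c2 ps "\<lambda>_. 0" ?p "\<lambda>_. 0"] by blast
qed

lemma cycle_edge_c1_and_path_edge:
  assumes "(2::'k::field) \<noteq> 0" "i < length c1" "Suc t < length ps"
  shows "\<exists>\<theta> :: 'a \<Rightarrow> 'k. in_U vertices \<theta> \<and> nonzero_edges edges \<theta> = {cycle_edge c1 i, path_edge ps t}"
proof -
  let ?a = "sign_flip i :: nat \<Rightarrow> 'k" and ?p = "alternating {..t} :: nat \<Rightarrow> 'k"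
  have "?a 0 = ?p 0" "?p (length ps - 1) = 0"
    using assms(3) by (simp_all add: alternating_def sign_flip_def)
  then have "nonzero_edges edges (weights c1 ps c2 ?a ?p (\<lambda>_. 0)) =
      {cycle_edge c1 s | s. s < length c1 \<and> ?a s + ?a (Suc s mod length c1) \<noteq> 0} \<union>
      {path_edge ps u | u. Suc u < length ps \<and> ?p u + ?p (Suc u) \<noteq> 0}"
    using nonzero_edges_weights[of ?a ?p "\<lambda>_. 0"] by simp
  also have "\<dots> = {cycle_edge c1 s | s. s < length c1 \<and> s = i} \<union>
      {path_edge ps u | u. Suc u < length ps \<and> u = t}"
    by (intro arg_cong2[where f = "(\<union>)"] setcompr_cong)
      (auto simp: sign_flip_step[OF assms(1) odd1 assms(2)] alternating_step)
  also have "\<dots> = {cycle_edge c1 i, path_edge ps t}" using assms by auto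
  finally show ?thesis using in_U_weights[of c1 c2 ps ?a ?p "\<lambda>_. 0"] by blast
qed

lemma cycle_edges_c1_c2:
  assumes "(2::'k::field) \<noteq> 0" "i < length c1" "j < length c2"
  shows "\<exists>\<theta> :: 'a \<Rightarrow> 'k. in_U vertices \<theta> \<and>
           nonzero_edges edges \<theta> = {cycle_edge c1 i, cycle_edge c2 j}"
proof -
  let ?a = "sign_flip i :: nat \<Rightarrow> 'k" and ?p = "\<lambda>t. (-1) ^ t :: 'k"
    and ?b = "\<lambda>s. (-1) ^ (length ps - 1) * sign_flip j s :: 'k"
  have "?a 0 = ?p 0" "?p (length ps - 1) = ?b 0" by (simp_all add: sign_flip_def)
  then have "nonzero_edges edges (weights c1 ps c2 ?a ?p ?b) =
      {cycle_edge c1 s | s. s < length c1 \<and> ?a s + ?a (Suc s mod length c1) \<noteq> 0} \<union>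
      {cycle_edge c2 s | s. s < length c2 \<and> ?b s + ?b (Suc s mod length c2) \<noteq> 0}"
    using nonzero_edges_weights[of ?a ?p ?b] by simp
  also have "\<dots> = {cycle_edge c1 s | s. s < length c1 \<and> s = i} \<union>
      {cycle_edge c2 s | s. s < length c2 \<and> s = j}"
  proof (intro arg_cong2[where f = "(\<union>)"] setcompr_cong)
    fix s assume "s < length c2"
    then show "?b s + ?b (Suc s mod length c2) \<noteq> 0 \<longleftrightarrow> s = j"
      using sign_flip_step[OF assms(1) odd2 assms(3)] by (simp flip: distrib_left)
  qed (rule sign_flip_step[OF assms(1) odd1 assms(2)])
  also have "\<dots> = {cycle_edge c1 i, cycle_edge c2 j}" using assms by auto
  finally show ?thesis using in_U_weights[of c1 c2 ps ?a ?p ?b] by blast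
qed

lemma cycle_c1_pair:
  assumes "(2::'k::field) \<noteq> 0" "e1 \<in> cycle_edges c1" "e2 \<in> edges" "e1 \<noteq> e2"
  shows "\<exists>\<theta> :: 'a \<Rightarrow> 'k. in_U vertices \<theta> \<and> nonzero_edges edges \<theta> = {e1, e2}"
proof -
  obtain i where i: "i < length c1" "e1 = cycle_edge c1 i"
    using assms(2) by (auto simp: cycle_edges_conv_cycle_edge)
  from assms(3) consider (c1) i' where "i' < length c1" "e2 = cycle_edge c1 i'"
    | (c2) j where "j < length c2" "e2 = cycle_edge c2 j"
    | (ps) t where "Suc t < length ps" "e2 = path_edge ps t"
    by (auto simp: cycle_edges_conv_cycle_edge path_edges_conv_path_edge)
  then show ?thesis
  proof cases
    case c1
    then have "i < i' \<or> i' < i" using i assms(4) by auto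
    then show ?thesis
      using two_cycle_edges_c1[of i i'] two_cycle_edges_c1[of i' i] i c1
      by (auto simp: insert_commute)
  next
    case c2
    then show ?thesis using cycle_edges_c1_c2[OF assms(1) i(1)] i by simp
  next
    case ps
    then show ?thesis using cycle_edge_c1_and_path_edge[OF assms(1) i(1)] i by simp
  qed
qed

lemma path_pair:
  assumes "e1 \<in> path_edges ps" "e2 \<in> path_edges ps" "e1 \<noteq> e2"
  shows "\<exists>\<theta> :: 'a \<Rightarrow> 'k::field. in_U vertices \<theta> \<and> nonzero_edges edges \<theta> = {e1, e2}"
proof -
  obtain t t' where t: "Suc t < length ps" "e1 = path_edge ps t"
    and t': "Suc t' < length ps" "e2 = path_edge ps t'"
    using assms(1,2) by (auto simp: path_edges_conv_path_edge)
  then have "t < t' \<or> t' < t" using assms(3) by auto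
  then show ?thesis
    using two_path_edges[of t t'] two_path_edges[of t' t] t t' by (auto simp: insert_commute)
qed

lemma paddle_lists_rev: "paddle_lists c2 (rev ps) c1"
  using cycle1 odd1 cycle2 odd2 distinct_ps ps_ne hd_c1 hd_c2 meet1 meet2 meet12
  by unfold_locales (auto simp: hd_rev last_rev)

lemma two_edge_support_paddle:
  assumes "(2::'k::field) \<noteq> 0"
  shows "two_edge_support TYPE('k) vertices edges"
  unfolding two_edge_support_iff
proof (intro ballI impI)
  fix e1 e2 assume e: "e1 \<in> edges" "e2 \<in> edges" "e1 \<noteq> e2"
  interpret rev: paddle_lists c2 "rev ps" c1 by (rule paddle_lists_rev)
  have same: "rev.vertices = vertices" "rev.edges = edges" by auto
  have "e1 \<in> cycle_edges c1 \<or> e2 \<in> cycle_edges c1 \<or> e1 \<in> cycle_edges c2 \<or> e2 \<in> cycle_edges c2 \<or>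
      e1 \<in> path_edges ps \<and> e2 \<in> path_edges ps"
    using e(1,2) by blast
  then show "\<exists>\<theta> :: 'a \<Rightarrow> 'k. in_U vertices \<theta> \<and> nonzero_edges edges \<theta> = {e1, e2}"
    using cycle_c1_pair[OF assms _ _ e(3)] cycle_c1_pair[OF assms _ _ e(3)[symmetric]]
      rev.cycle_c1_pair[OF assms _ _ e(3), unfolded same]
      rev.cycle_c1_pair[OF assms _ _ e(3)[symmetric], unfolded same] path_pair[OF _ _ e(3)] e(1,2)
    by (auto simp: insert_commute)
qed

end

lemma cycle_edges_rotate1: "cycle_edges (rotate1 xs) = cycle_edges xs"
proof (cases xs)
  case (Cons x r)
  then show ?thesis
    by (cases "r = []")
      (auto simp: cycle_edges_conv_path_edges path_edges_snoc path_edges_Cons insert_commute)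
qed simp

lemma cycle_edges_rotate: "cycle_edges (rotate n xs) = cycle_edges xs"
  by (induction n) (simp_all add: cycle_edges_rotate1)

lemma rotate_cycle_to:
  assumes "is_cycle c" "x \<in> set c"
  obtains c' where "is_cycle c'" "length c' = length c" "set c' = set c"
    "cycle_edges c' = cycle_edges c" "hd c' = x"
proof -
  obtain n where n: "n < length c" "c ! n = x" using assms(2) by (auto simp: in_set_conv_nth)
  have "hd (rotate n c) = rotate n c ! 0" using n by (subst hd_conv_nth) auto
  also have "\<dots> = x" using n nth_rotate[of 0 c n] by (cases c) auto
  finally show ?thesis
    using that[of "rotate n c"] assms(1) by (simp add: cycle_edges_rotate is_cycle_def)
qed

lemma two_edge_support_paddle_lists:
  assumes "(2::'k::field) \<noteq> 0"
    and c: "is_cycle c1" "odd (length c1)" "is_cycle c2" "odd (length c2)"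
    and ps: "distinct ps" "ps \<noteq> []" "hd ps \<in> set c1" "last ps \<in> set c2"
    and meet: "set ps \<inter> set c1 = {hd ps}" "set ps \<inter> set c2 = {last ps}" "set c1 \<inter> set c2 \<subseteq> set ps"
  shows "two_edge_support TYPE('k) (set c1 \<union> set c2 \<union> set ps)
           (cycle_edges c1 \<union> cycle_edges c2 \<union> path_edges ps)"
proof -
  obtain c1' where c1': "is_cycle c1'" "length c1' = length c1" "set c1' = set c1"
      "cycle_edges c1' = cycle_edges c1" "hd c1' = hd ps"
    using rotate_cycle_to[OF c(1) ps(3)] by blast
  obtain c2' where c2': "is_cycle c2'" "length c2' = length c2" "set c2' = set c2"
      "cycle_edges c2' = cycle_edges c2" "hd c2' = last ps"
    using rotate_cycle_to[OF c(3) ps(4)] by blast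
  interpret paddle_lists c1' ps c2'
    using c c1' c2' ps meet by unfold_locales simp_all
  show ?thesis using two_edge_support_paddle[OF assms(1)] c1' c2' by simp
qed

lemma two_edge_support_if_doubly_odd_paddle:
  assumes "(2::'k::field) \<noteq> 0" and "doubly_odd_paddle V E"
  shows "two_edge_support TYPE('k) V E"
proof -
  obtain c1 c2 where c: "is_cycle c1" "is_cycle c2" "odd (length c1)" "odd (length c2)"
    and cases: "(\<exists>v. set c1 \<inter> set c2 = {v} \<and> V = set c1 \<union> set c2 \<and>
          E = cycle_edges c1 \<union> cycle_edges c2) \<or>
        (set c1 \<inter> set c2 = {} \<and> (\<exists>ps. distinct ps \<and> length ps \<ge> 2 \<and>
           hd ps \<in> set c1 \<and> last ps \<in> set c2 \<and>
           (\<forall>x\<in>set (butlast (tl ps)). x \<notin> set c1 \<and> x \<notin> set c2) \<and>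
           V = set c1 \<union> set c2 \<union> set ps \<and> E = cycle_edges c1 \<union> cycle_edges c2 \<union> path_edges ps))"
    using assms(2) unfolding doubly_odd_paddle_def by blast
  from cases show ?thesis
  proof (elim disjE exE conjE)
    fix v assume v: "set c1 \<inter> set c2 = {v}" and VE: "V = set c1 \<union> set c2"
      "E = cycle_edges c1 \<union> cycle_edges c2"
    have "two_edge_support TYPE('k) (set c1 \<union> set c2 \<union> set [v])
        (cycle_edges c1 \<union> cycle_edges c2 \<union> path_edges [v])"
      using v by (intro two_edge_support_paddle_lists[OF assms(1) c(1,3,2,4)]) auto
    moreover have "v \<in> set c1 \<union> set c2" using v by blast
    ultimately show ?thesis using VE by (simp add: insert_absorb)
  next
    fix ps assume disj: "set c1 \<inter> set c2 = {}" and ps: "distinct ps" "length ps \<ge> 2"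
      "hd ps \<in> set c1" "last ps \<in> set c2"
      and inner: "\<forall>x\<in>set (butlast (tl ps)). x \<notin> set c1 \<and> x \<notin> set c2"
      and VE: "V = set c1 \<union> set c2 \<union> set ps" "E = cycle_edges c1 \<union> cycle_edges c2 \<union> path_edges ps"
    have "ps \<noteq> []" using ps(2) by auto
    then have "hd ps \<in> set ps" "last ps \<in> set ps" by simp_all
    then have "set ps \<inter> set c1 = {hd ps}" "set ps \<inter> set c2 = {last ps}"
      using inner set_butlast_tl[OF ps(1)] disj ps(3,4) by blast+
    then show ?thesis
      using two_edge_support_paddle_lists[OF assms(1) c(1,3,2,4) ps(1) \<open>ps \<noteq> []\<close> ps(3,4)] disj VE
      by simp
  qed
qed

theorem theorem7p3:
  assumes "(2::'k::field) \<noteq> 0"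
  shows "(\<forall>(V :: 'a set) (E :: 'a set set).
            simple_graph V E \<and> connected_graph V E \<and> card E = card V + 1 \<and>
            two_edge_support TYPE('k) V E
            \<longrightarrow> \<not> edge_square TYPE('k) V E \<and> doubly_odd_paddle V E) \<and>
         (\<forall>(V :: 'a set) (E :: 'a set set). doubly_odd_paddle V E \<longrightarrow>
            two_edge_support TYPE('k) V E)"
proof (rule conjI; intro allI impI)
  fix V :: "'a set" and E :: "'a set set"
  assume "simple_graph V E \<and> connected_graph V E \<and> card E = card V + 1 \<and>
    two_edge_support TYPE('k) V E"
  then have G: "simple_graph V E" "connected_graph V E" "card E = card V + 1"
    "two_edge_support TYPE('k) V E" by simp_all
  show "\<not> edge_square TYPE('k) V E \<and> doubly_odd_paddle V E"
    using card_edges_le_if_edge_square[OF G(1)] paddle_if_two_edge_support[OF G(1,4,2,3)] G(3)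
    by fastforce
next
  fix V :: "'a set" and E :: "'a set set"
  assume "doubly_odd_paddle V E"
  then show "two_edge_support TYPE('k) V E"
    by (rule two_edge_support_if_doubly_odd_paddle[OF assms])
qed

end
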